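(* For every $D>0$ there exists $R>0$ (depending only on $D$) such that the following holds. Let $(C,S)$ be a right-angled Coxeter system and let $\gamma\in C$ have $D$-bounded product projections. Then every itinerary traversing $\gamma$ is equivalent to an itinerary $\mathcal{U}$ of the form $$\{W_1\},\mathcal{V}_1,\{W_2\},\mathcal{V}_2,\dots,\{W_n\},\mathcal{V}_n$$ (a concatenation, where each $\mathcal{V}_i$ is a possibly empty sequence of walls) such that: (a) $|\mathcal{V}_i|\le R$ for all $i$; (b) every wall in $\mathcal{V}_i$ intersects $W_i$; (c) $W_i\cap W_j=\emptyset$ for all $i\ne j$; (d) every wall $W_i$ intersects at most $R$ other walls of $\mathcal{U}$.
   Context: $(C,S)$ right-angled Coxeter system. Walls: for a reflection $r$ (conjugate of a generator), the set of edges $\{g,gs\}$ of $\mathrm{Cay}(C,S)$ with $gsg^{-1}=r$; these are the hyperplanes of the Davis complex, and two walls intersect if the hyperplanes intersect (for distinct walls, equivalently the reflections commute). A wall separates $\alpha,\beta$ if every edge path from $\alpha$ to $\beta$ uses one of its edges; $\mathbf{W}(\alpha,\beta)$ is the set of separating walls, $\mathbf{W}(\gamma)=\mathbf{W}(\mathrm{id},\gamma)$, with partial order $W<W'$ iff $W$ separates $\alpha$ from $W'$. An itinerary is a sequence of walls $W_1,\dots,W_m$ with edges $e_i\in W_i$ forming a geodesic edge path; it traverses the element represented by the word of edge labels; it joins $\alpha$ to $\beta$ if such a path goes from $\alpha$ to $\beta$. Two itineraries are equivalent if both join some $\alpha$ to some $\beta$. $|\mathcal{V}|$ is the number of walls of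 $\mathcal{V}$. $\gamma$ has $D$-bounded product projections if every pair of disjoint subsets $A,B\subset\mathbf{W}(\gamma)$ such that each element of $A$ is incomparable with each element of $B$ satisfies $\min(|A|,|B|)\le D$. *)

theory Defs
  imports Complex_Main
begin

text \<open>Right-angled Coxeter systems, presented by a set of generators S and a
  commutation graph E on S.  Group elements are equivalence classes of words
  over S modulo the Coxeter relations s s = 1 and s t = t s for E s t.\<close>

inductive_set rstep :: "'a set \<Rightarrow> ('a \<Rightarrow> 'a \<Rightarrow> bool) \<Rightarrow> ('a list \<times> 'a list) set"
  for S :: "'a set" and E :: "'a \<Rightarrow> 'a \<Rightarrow> bool" where
  del: "s \<in> S \<Longrightarrow> (xs @ [s, s] @ ys, xs @ ys) \<in> rstep S E"
| swap: "E s t \<Longrightarrow> (xs @ [s, t] @ ys, xs @ [t, s] @ ys) \<in> rstep S E"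

definition weq :: "'a set \<Rightarrow> ('a \<Rightarrow> 'a \<Rightarrow> bool) \<Rightarrow> ('a list \<times> 'a list) set" where
  "weq S E = (rstep S E \<union> (rstep S E)\<inverse>)\<^sup>*"

definition cls :: "'a set \<Rightarrow> ('a \<Rightarrow> 'a \<Rightarrow> bool) \<Rightarrow> 'a list \<Rightarrow> 'a list set" where
  "cls S E u = {v. (u, v) \<in> weq S E}"

definition grp :: "'a set \<Rightarrow> ('a \<Rightarrow> 'a \<Rightarrow> bool) \<Rightarrow> 'a list set set" where
  "grp S E = {cls S E u | u. u \<in> lists S}"

text \<open>(S,E) defines a right-angled Coxeter system: S finite, E a simple graph on S
  (m_st = 2 if E s t, m_st = infinity otherwise).\<close>
definition racs :: "'a set \<Rightarrow> ('a \<Rightarrow> 'a \<Rightarrow> bool) \<Rightarrow> bool" where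
  "racs S E \<longleftrightarrow> finite S \<and> (\<forall>s t. E s t \<longrightarrow> s \<in> S \<and> t \<in> S \<and> s \<noteq> t \<and> E t s)"

text \<open>Reflections: conjugates g s g^-1 of generators (g^-1 is the reversed word).\<close>
definition reflections :: "'a set \<Rightarrow> ('a \<Rightarrow> 'a \<Rightarrow> bool) \<Rightarrow> 'a list set set" where
  "reflections S E = {cls S E (v @ [s] @ rev v) | v s. v \<in> lists S \<and> s \<in> S}"

definition wall :: "'a set \<Rightarrow> ('a \<Rightarrow> 'a \<Rightarrow> bool) \<Rightarrow> 'a list set \<Rightarrow> 'a list set set set" where
  "wall S E r = {{cls S E v, cls S E (v @ [s])} | v s.
      v \<in> lists S \<and> s \<in> S \<and> cls S E (v @ [s] @ rev v) = r}"

definition walls :: "'a set \<Rightarrow> ('a \<Rightarrow> 'a \<Rightarrow> bool) \<Rightarrow> 'a list set set set set" where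
  "walls S E = wall S E ` reflections S E"

definition commute_el :: "'a set \<Rightarrow> ('a \<Rightarrow> 'a \<Rightarrow> bool) \<Rightarrow> 'a list set \<Rightarrow> 'a list set \<Rightarrow> bool" where
  "commute_el S E g h \<longleftrightarrow>
     (\<exists>a\<in>g. \<exists>b\<in>h. a \<in> lists S \<and> b \<in> lists S \<and> cls S E (a @ b) = cls S E (b @ a))"

definition walls_intersect :: "'a set \<Rightarrow> ('a \<Rightarrow> 'a \<Rightarrow> bool) \<Rightarrow>
    'a list set set set \<Rightarrow> 'a list set set set \<Rightarrow> bool" where
  "walls_intersect S E W W' \<longleftrightarrow>
     (\<exists>r\<in>reflections S E. \<exists>r'\<in>reflections S E.
        W = wall S E r \<and> W' = wall S E r' \<and> (r = r' \<or> commute_el S E r r'))"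

definition path_uses :: "'a set \<Rightarrow> ('a \<Rightarrow> 'a \<Rightarrow> bool) \<Rightarrow> 'a list \<Rightarrow> 'a list \<Rightarrow>
    'a list set set set \<Rightarrow> bool" where
  "path_uses S E u v W \<longleftrightarrow>
     (\<exists>i<length v. {cls S E (u @ take i v), cls S E (u @ take (Suc i) v)} \<in> W)"

definition separates :: "'a set \<Rightarrow> ('a \<Rightarrow> 'a \<Rightarrow> bool) \<Rightarrow> 'a list set set set \<Rightarrow>
    'a list set \<Rightarrow> 'a list set \<Rightarrow> bool" where
  "separates S E W \<alpha> \<beta> \<longleftrightarrow>
     (\<forall>u\<in>lists S. \<forall>v\<in>lists S. cls S E u = \<alpha> \<longrightarrow> cls S E (u @ v) = \<beta> \<longrightarrow> path_uses S E u v W)"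

definition sep_walls :: "'a set \<Rightarrow> ('a \<Rightarrow> 'a \<Rightarrow> bool) \<Rightarrow> 'a list set \<Rightarrow> 'a list set \<Rightarrow>
    'a list set set set set" where
  "sep_walls S E \<alpha> \<beta> = {W \<in> walls S E. separates S E W \<alpha> \<beta>}"

definition wall_less :: "'a set \<Rightarrow> ('a \<Rightarrow> 'a \<Rightarrow> bool) \<Rightarrow> 'a list set \<Rightarrow>
    'a list set set set \<Rightarrow> 'a list set set set \<Rightarrow> bool" where
  "wall_less S E \<alpha> W W' \<longleftrightarrow> (\<forall>e\<in>W'. \<forall>x\<in>e. separates S E W \<alpha> x)"

definition bounded_product_projections :: "'a set \<Rightarrow> ('a \<Rightarrow> 'a \<Rightarrow> bool) \<Rightarrow> real \<Rightarrow>
    'a list set \<Rightarrow> bool" where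
  "bounded_product_projections S E D \<gamma> \<longleftrightarrow>
     (\<forall>A B. A \<subseteq> sep_walls S E (cls S E []) \<gamma> \<longrightarrow> B \<subseteq> sep_walls S E (cls S E []) \<gamma> \<longrightarrow>
        A \<inter> B = {} \<longrightarrow>
        (\<forall>a\<in>A. \<forall>b\<in>B. \<not> wall_less S E (cls S E []) a b \<and> \<not> wall_less S E (cls S E []) b a) \<longrightarrow>
        real (min (card A) (card B)) \<le> D)"

definition realizes :: "'a set \<Rightarrow> ('a \<Rightarrow> 'a \<Rightarrow> bool) \<Rightarrow> 'a list set set set list \<Rightarrow>
    'a list \<Rightarrow> 'a list \<Rightarrow> bool" where
  "realizes S E Ws u w \<longleftrightarrow>
     u \<in> lists S \<and> w \<in> lists S \<and> length w = length Ws \<and>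
     (\<forall>i<length Ws. Ws ! i \<in> walls S E \<and>
        {cls S E (u @ take i w), cls S E (u @ take (Suc i) w)} \<in> Ws ! i) \<and>
     (\<forall>v\<in>lists S. cls S E (u @ v) = cls S E (u @ w) \<longrightarrow> length w \<le> length v)"

definition itinerary :: "'a set \<Rightarrow> ('a \<Rightarrow> 'a \<Rightarrow> bool) \<Rightarrow> 'a list set set set list \<Rightarrow> bool" where
  "itinerary S E Ws \<longleftrightarrow> (\<exists>u w. realizes S E Ws u w)"

definition traverses :: "'a set \<Rightarrow> ('a \<Rightarrow> 'a \<Rightarrow> bool) \<Rightarrow> 'a list set set set list \<Rightarrow>
    'a list set \<Rightarrow> bool" where
  "traverses S E Ws \<gamma> \<longleftrightarrow> (\<exists>u w. realizes S E Ws u w \<and> cls S E w = \<gamma>)"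

definition joins :: "'a set \<Rightarrow> ('a \<Rightarrow> 'a \<Rightarrow> bool) \<Rightarrow> 'a list set set set list \<Rightarrow>
    'a list set \<Rightarrow> 'a list set \<Rightarrow> bool" where
  "joins S E Ws \<alpha> \<beta> \<longleftrightarrow> (\<exists>u w. realizes S E Ws u w \<and> cls S E u = \<alpha> \<and> cls S E (u @ w) = \<beta>)"

definition itin_equiv :: "'a set \<Rightarrow> ('a \<Rightarrow> 'a \<Rightarrow> bool) \<Rightarrow> 'a list set set set list \<Rightarrow>
    'a list set set set list \<Rightarrow> bool" where
  "itin_equiv S E Ws Ws' \<longleftrightarrow> (\<exists>\<alpha> \<beta>. joins S E Ws \<alpha> \<beta> \<and> joins S E Ws' \<alpha> \<beta>)"

end

theory Submission
  imports Defs
begin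

(*
  Fix a geodesic word w for \<gamma> and order the walls it crosses by nesting (W < W' when W
  separates 1 from W').  Two walls of w cross exactly when they are not nested: nested walls are
  disjoint, while two unnested walls are crossed consecutively by some geodesic with the same
  endpoints, and then by commuting letters.  Moreover every linear extension of the nesting order
  is the wall sequence of such a geodesic.  So the theorem becomes a statement about a finite
  order in which two disjoint sets of mutually incomparable elements cannot both have more than
  K = floor D elements.  Take a chain W_1 < ... < W_n of maximum cardinality and attach every
  other wall to the first W_i it crosses; listing each W_i followed by its attached walls is a
  linear extension.  A wall crossing W_i also crosses W_(i+K) or W_(i-K) (at most K walls each,
  by the product bound), or else it is comparable to both, and then a chain of such walls could
  replace the chain between W_(i-K) and W_(i+K), so it has at most 2K + 1 elements.  As antichains
  have at most 2K + 1 elements as well, Mirsky's theorem leaves at most (2K + 1)^2 such walls.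
*)

lemma list_split_two:
  assumes "i < j" "j < length v"
  obtains p c q d rest where "v = p @ [c] @ q @ [d] @ rest" "length p = i" "length q = j - i - 1"
proof -
  have d1: "drop i v = v ! i # drop (Suc i) v" using assms by (simp add: Cons_nth_drop_Suc)
  have d2: "drop (Suc i) v = take (j - i - 1) (drop (Suc i) v) @ drop (j - i - 1) (drop (Suc i) v)"
    by (rule append_take_drop_id[symmetric])
  have d3: "drop (j - i - 1) (drop (Suc i) v) = drop j v" using assms by simp
  have d4: "drop j v = v ! j # drop (Suc j) v" using assms by (simp add: Cons_nth_drop_Suc)
  have "v = take i v @ drop i v" by simp
  also have "\<dots> = take i v @ [v ! i] @ take (j - i - 1) (drop (Suc i) v) @ [v ! j] @ drop (Suc j) v"
    unfolding d1 by (subst d2, unfold d3 d4) simp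
  finally have "v = take i v @ [v ! i] @ take (j - i - 1) (drop (Suc i) v) @ [v ! j] @ drop (Suc j) v" .
  then show ?thesis using assms by (intro that) auto
qed

lemma distinct_concat_upt:
  assumes "\<And>i. i < n \<Longrightarrow> distinct (f i)"
    and "\<And>i j. i < j \<Longrightarrow> j < n \<Longrightarrow> set (f i) \<inter> set (f j) = {}"
  shows "distinct (concat (map f [0..<n]))"
  using assms
proof (induction n)
  case (Suc n)
  have "set (concat (map f [0..<n])) \<inter> set (f n) = {}" using Suc.prems(2) by fastforce
  with Suc show ?case by simp
qed simp

lemma sorted_wrt_concat_upt:
  assumes "\<And>i. i < n \<Longrightarrow> sorted_wrt R (f i)"
    and "\<And>i j x y. i < j \<Longrightarrow> j < n \<Longrightarrow> x \<in> set (f i) \<Longrightarrow> y \<in> set (f j) \<Longrightarrow> R x y"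
  shows "sorted_wrt R (concat (map f [0..<n]))"
  using assms
proof (induction n)
  case (Suc n)
  have "\<forall>x\<in>set (concat (map f [0..<n])). \<forall>y\<in>set (f n). R x y" using Suc.prems(2) by fastforce
  with Suc show ?case by (simp add: sorted_wrt_append)
qed simp

section \<open>Words in a right-angled Coxeter group\<close>

locale right_angled_coxeter =
  fixes S :: "'a set" and E :: "'a \<Rightarrow> 'a \<Rightarrow> bool"
  assumes E_sym: "E s t \<Longrightarrow> E t s" and E_irrefl: "\<not> E s s" and E_dom: "E s t \<Longrightarrow> s \<in> S"
begin

definition eqv (infix "\<approx>" 50) where "x \<approx> y \<longleftrightarrow> (x, y) \<in> weq S E"

lemma E_ran: "E s t \<Longrightarrow> t \<in> S" using E_dom E_sym by blast

lemma lists_take: "v \<in> lists S \<Longrightarrow> take i v \<in> lists S"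
  by (auto simp: in_lists_conv_set dest: in_set_takeD)

lemma lists_nth: "v \<in> lists S \<Longrightarrow> i < length v \<Longrightarrow> v ! i \<in> S"
  by (auto simp: in_lists_conv_set)

lemma lists_rev: "v \<in> lists S \<Longrightarrow> rev v \<in> lists S"
  by (auto simp: in_lists_conv_set)

lemma eqv_refl[simp, intro]: "x \<approx> x" unfolding eqv_def weq_def by simp

lemma eqv_sym: "x \<approx> y \<Longrightarrow> y \<approx> x"
proof -
  assume "x \<approx> y"
  hence "(y, x) \<in> ((rstep S E \<union> (rstep S E)\<inverse>)\<inverse>)\<^sup>*"
    unfolding eqv_def weq_def by (simp add: rtrancl_converseI)
  moreover have "(rstep S E \<union> (rstep S E)\<inverse>)\<inverse> = rstep S E \<union> (rstep S E)\<inverse>" by auto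
  ultimately show ?thesis unfolding eqv_def weq_def by simp
qed

lemma eqv_trans[trans]: "x \<approx> y \<Longrightarrow> y \<approx> z \<Longrightarrow> x \<approx> z"
  unfolding eqv_def weq_def by (rule rtrancl_trans)

lemma rstep_context: "(x, y) \<in> rstep S E \<Longrightarrow> (p @ x @ q, p @ y @ q) \<in> rstep S E"
proof (induction rule: rstep.induct)
  case (del s xs ys)
  then show ?case using rstep.del[where xs="p @ xs" and ys="ys @ q" and E=E] by simp
next
  case (swap s t xs ys)
  then show ?case using rstep.swap[where xs="p @ xs" and ys="ys @ q" and S=S] by simp
qed

lemma eqv_context: "x \<approx> y \<Longrightarrow> p @ x @ q \<approx> p @ y @ q"
  unfolding eqv_def weq_def
proof (induction rule: rtrancl_induct)
  case base
  then show ?case by simp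
next
  case (step y z)
  hence "(p @ y @ q, p @ z @ q) \<in> rstep S E \<union> (rstep S E)\<inverse>"
    using rstep_context by blast
  then show ?case by (rule rtrancl_into_rtrancl[OF step.IH])
qed

lemma eqv_append: "a \<approx> a' \<Longrightarrow> b \<approx> b' \<Longrightarrow> a @ b \<approx> a' @ b'"
  using eqv_context[of a a' "[]" b] eqv_context[of b b' a' "[]"] eqv_trans by auto

lemma eqv_double: "s \<in> S \<Longrightarrow> [s, s] \<approx> []"
  using rstep.del[where xs="[]" and ys="[]" and E=E] unfolding eqv_def weq_def by auto

lemma eqv_swap: "E s t \<Longrightarrow> [s, t] \<approx> [t, s]"
  using rstep.swap[where xs="[]" and ys="[]" and S=S] unfolding eqv_def weq_def by auto

lemma eqv_commuting_conj:
  assumes st: "E s t"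
  shows "[s, t, s] \<approx> [t]"
proof -
  have "[s, t, s] = [s, t] @ [s]" by simp
  also have "\<dots> \<approx> [t, s] @ [s]" using eqv_append[OF eqv_swap[OF st] eqv_refl] .
  also have "\<dots> = [t] @ [s, s]" by simp
  also have "\<dots> \<approx> [t] @ []" using eqv_append[OF eqv_refl eqv_double[OF E_dom[OF st]]] .
  finally show ?thesis by simp
qed

lemma append_rev_eqv_Nil: "v \<in> lists S \<Longrightarrow> v @ rev v \<approx> []"
proof (induction v)
  case Nil
  then show ?case by simp
next
  case (Cons a v)
  have "(a # v) @ rev (a # v) = [a] @ (v @ rev v) @ [a]" by simp
  also have "\<dots> \<approx> [a] @ [] @ [a]" using Cons by (intro eqv_context) auto
  also have "\<dots> \<approx> []" using Cons eqv_double by auto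
  finally show ?case .
qed

lemma rev_append_eqv_Nil: "v \<in> lists S \<Longrightarrow> rev v @ v \<approx> []"
  using append_rev_eqv_Nil[of "rev v"] by (simp add: in_lists_conv_set)

lemma eqv_cancel_left: "x \<in> lists S \<Longrightarrow> x @ a \<approx> x @ b \<Longrightarrow> a \<approx> b"
proof -
  assume x: "x \<in> lists S" and h: "x @ a \<approx> x @ b"
  have "a \<approx> (rev x @ x) @ a" using eqv_append[OF eqv_sym[OF rev_append_eqv_Nil[OF x]] eqv_refl] by simp
  also have "\<dots> = rev x @ (x @ a) @ []" by simp
  also have "\<dots> \<approx> rev x @ (x @ b) @ []" using h by (rule eqv_context)
  also have "\<dots> = (rev x @ x) @ b" by simp
  also have "\<dots> \<approx> [] @ b" using eqv_append[OF rev_append_eqv_Nil[OF x] eqv_refl] .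
  finally show ?thesis by simp
qed

lemma eqv_cancel_right: "x \<in> lists S \<Longrightarrow> a @ x \<approx> b @ x \<Longrightarrow> a \<approx> b"
proof -
  assume x: "x \<in> lists S" and h: "a @ x \<approx> b @ x"
  have "a \<approx> a @ (x @ rev x)" using eqv_append[OF eqv_refl eqv_sym[OF append_rev_eqv_Nil[OF x]]] by simp
  also have "\<dots> = [] @ (a @ x) @ rev x" by simp
  also have "\<dots> \<approx> [] @ (b @ x) @ rev x" using h by (rule eqv_context)
  also have "\<dots> = b @ (x @ rev x)" by simp
  also have "\<dots> \<approx> b @ []" using eqv_append[OF eqv_refl append_rev_eqv_Nil[OF x]] .
  finally show ?thesis by simp
qed

lemma rstep_rev: "(x, y) \<in> rstep S E \<Longrightarrow> (rev x, rev y) \<in> rstep S E"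
proof (induction rule: rstep.induct)
  case (del s xs ys)
  then show ?case using rstep.del[where xs="rev ys" and ys="rev xs" and E=E] by simp
next
  case (swap s t xs ys)
  then show ?case using rstep.swap[where s=t and t=s and xs="rev ys" and ys="rev xs" and S=S] E_sym by simp
qed

lemma eqv_rev: "x \<approx> y \<Longrightarrow> rev x \<approx> rev y"
  unfolding eqv_def weq_def
proof (induction rule: rtrancl_induct)
  case base
  then show ?case by simp
next
  case (step y z)
  hence "(rev y, rev z) \<in> rstep S E \<union> (rstep S E)\<inverse>"
    using rstep_rev by blast
  then show ?case by (rule rtrancl_into_rtrancl[OF step.IH])
qed

lemma cls_self[simp]: "x \<in> cls S E x"
  unfolding cls_def using eqv_refl[of x, unfolded eqv_def] by simp

lemma cls_eq_iff: "cls S E x = cls S E y \<longleftrightarrow> x \<approx> y"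
proof
  assume "cls S E x = cls S E y"
  moreover have "y \<in> cls S E y" unfolding cls_def using eqv_refl[of y, unfolded eqv_def] by simp
  ultimately show "x \<approx> y" unfolding cls_def eqv_def by blast
next
  assume h: "x \<approx> y"
  show "cls S E x = cls S E y"
    unfolding cls_def using h eqv_sym eqv_trans unfolding eqv_def by blast
qed

lemma eqv_conj_cancel: "g \<in> lists S \<Longrightarrow> g @ a @ rev g \<approx> g @ b @ rev g \<Longrightarrow> a \<approx> b"
  using eqv_cancel_left[of g "a @ rev g" "b @ rev g"] eqv_cancel_right[of "rev g" a b] by (simp add: in_lists_conv_set)

lemma cls_conj_eq_iff:
  "u \<in> lists S \<Longrightarrow> cls S E (u @ a @ rev u) = cls S E (u @ b @ rev u) \<longleftrightarrow> cls S E a = cls S E b"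
  using eqv_conj_cancel eqv_context by (auto simp: cls_eq_iff)

section \<open>Inversion sets\<close>

text \<open>\<open>odd_crossings u v\<close> is the set of reflections whose walls the edge path from \<open>u\<close> with labels
  \<open>v\<close> crosses an odd number of times; \<open>inversions v\<close> are those separating \<open>1\<close> from \<open>v\<close>.\<close>

fun odd_crossings :: "'a list \<Rightarrow> 'a list \<Rightarrow> 'a list set set" where
  "odd_crossings u [] = {}"
| "odd_crossings u (c # v) = sym_diff {cls S E (u @ [c] @ rev u)} (odd_crossings (u @ [c]) v)"

lemma odd_crossings_cong: "u \<approx> u' \<Longrightarrow> odd_crossings u v = odd_crossings u' v"
proof (induction v arbitrary: u u')
  case Nil
  then show ?case by simp
next
  case (Cons c v)
  have "u @ [c] @ rev u \<approx> u' @ [c] @ rev u'"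
    using Cons.prems by (intro eqv_append eqv_rev) auto
  hence "cls S E (u @ [c] @ rev u) = cls S E (u' @ [c] @ rev u')" by (simp add: cls_eq_iff)
  moreover have "odd_crossings (u @ [c]) v = odd_crossings (u' @ [c]) v"
    using Cons by (intro Cons.IH eqv_append) auto
  ultimately show ?case by simp
qed

lemma odd_crossings_append: "odd_crossings u (v @ w) = sym_diff (odd_crossings u v) (odd_crossings (u @ v) w)"
  by (induction v arbitrary: u) auto

lemma odd_crossings_rstep: "(v, v') \<in> rstep S E \<Longrightarrow> odd_crossings u v = odd_crossings u v'"
proof (induction rule: rstep.induct)
  case (del s xs ys)
  let ?g = "u @ xs"
  have a: "?g @ [s, s, s] @ rev ?g \<approx> ?g @ [s] @ rev ?g"
    using eqv_context[OF eqv_append[OF eqv_double[OF del] eqv_refl[of "[s]"]], of ?g "rev ?g"] by simp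
  have b: "odd_crossings (?g @ [s, s]) ys = odd_crossings ?g ys"
    using eqv_context[OF eqv_double[OF del], of ?g "[]"] by (intro odd_crossings_cong) simp
  have "odd_crossings u (xs @ [s, s] @ ys) = sym_diff (odd_crossings u xs) (odd_crossings ?g ([s, s] @ ys))" by (simp add: odd_crossings_append)
  also have "odd_crossings ?g ([s, s] @ ys) = sym_diff {cls S E (?g @ [s] @ rev ?g)}
      (sym_diff {cls S E (?g @ [s, s, s] @ rev ?g)} (odd_crossings (?g @ [s, s]) ys))" by simp
  also have "\<dots> = odd_crossings ?g ys" using a b by (simp add: cls_eq_iff[symmetric]) auto
  finally show ?case by (simp add: odd_crossings_append)
next
  case (swap s t xs ys)
  let ?g = "u @ xs"
  have st: "[s, t] \<approx> [t, s]" using eqv_swap[OF swap] .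
  have a: "?g @ [s, t, s] @ rev ?g \<approx> ?g @ [t] @ rev ?g"
    using eqv_commuting_conj[OF swap] by (rule eqv_context)
  have b: "?g @ [t, s, t] @ rev ?g \<approx> ?g @ [s] @ rev ?g"
    using eqv_commuting_conj[OF E_sym[OF swap]] by (rule eqv_context)
  have c: "odd_crossings (?g @ [s, t]) ys = odd_crossings (?g @ [t, s]) ys"
    using eqv_context[OF st, of ?g "[]"] by (intro odd_crossings_cong) simp
  have "odd_crossings ?g ([s, t] @ ys) = odd_crossings ?g ([t, s] @ ys)"
    using a b c by (simp add: cls_eq_iff[symmetric]) auto
  then show ?case by (simp add: odd_crossings_append)
qed

lemma odd_crossings_eqv: "v \<approx> v' \<Longrightarrow> odd_crossings u v = odd_crossings u v'"
  unfolding eqv_def weq_def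
proof (induction rule: rtrancl_induct)
  case base
  then show ?case by simp
next
  case (step y z)
  then show ?case using odd_crossings_rstep by auto
qed

definition edge_refl :: "'a list \<Rightarrow> 'a list \<Rightarrow> nat \<Rightarrow> 'a list set" where
  "edge_refl u v i = cls S E (u @ take i v @ [v ! i] @ rev (u @ take i v))"

lemma edge_refl_Cons_Suc: "edge_refl u (c # v) (Suc i) = edge_refl (u @ [c]) v i"
  by (simp add: edge_refl_def)

lemma edge_refl_Cons_0: "edge_refl u (c # v) 0 = cls S E (u @ [c] @ rev u)"
  by (simp add: edge_refl_def)

lemma odd_crossings_edge_refl: "r \<in> odd_crossings u v \<Longrightarrow> \<exists>i<length v. edge_refl u v i = r"
proof (induction v arbitrary: u)
  case Nil
  then show ?case by simp
next
  case (Cons c v)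
  show ?case
  proof (cases "r = cls S E (u @ [c] @ rev u)")
    case True
    then show ?thesis using edge_refl_Cons_0 by force
  next
    case False
    hence "r \<in> odd_crossings (u @ [c]) v" using Cons.prems by simp
    then obtain i where "i < length v" "edge_refl (u @ [c]) v i = r" using Cons.IH by blast
    then show ?thesis by (intro exI[of _ "Suc i"]) (simp add: edge_refl_Cons_Suc)
  qed
qed

lemma odd_crossings_distinct:
  "(\<And>i j. i < j \<Longrightarrow> j < length v \<Longrightarrow> edge_refl u v i \<noteq> edge_refl u v j) \<Longrightarrow>
   odd_crossings u v = {edge_refl u v i | i. i < length v}"
proof (induction v arbitrary: u)
  case Nil
  then show ?case by simp
next
  case (Cons c v)
  have ih: "odd_crossings (u @ [c]) v = {edge_refl (u @ [c]) v i | i. i < length v}"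
  proof (rule Cons.IH)
    fix i j assume "i < j" "j < length v"
    then show "edge_refl (u @ [c]) v i \<noteq> edge_refl (u @ [c]) v j"
      using Cons.prems[of "Suc i" "Suc j"] by (simp add: edge_refl_Cons_Suc)
  qed
  have nin: "cls S E (u @ [c] @ rev u) \<notin> odd_crossings (u @ [c]) v"
  proof
    assume "cls S E (u @ [c] @ rev u) \<in> odd_crossings (u @ [c]) v"
    then obtain i where "i < length v" "edge_refl (u @ [c]) v i = cls S E (u @ [c] @ rev u)"
      using ih by auto
    then show False using Cons.prems[of 0 "Suc i"] by (simp add: edge_refl_Cons_Suc edge_refl_Cons_0)
  qed
  have "odd_crossings u (c # v) = insert (cls S E (u @ [c] @ rev u)) (odd_crossings (u @ [c]) v)"
    using nin by auto
  also have "\<dots> = {edge_refl u (c # v) i | i. i < length (c # v)}"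
  proof -
    have eq: "\<And>(f :: nat \<Rightarrow> 'a list set) n. {f i | i. i < Suc n} = insert (f 0) {f (Suc i) | i. i < n}"
      by (auto simp: less_Suc_eq_0_disj)
    show ?thesis unfolding ih using eq[of "edge_refl u (c # v)" "length v"]
      by (simp add: edge_refl_Cons_Suc edge_refl_Cons_0)
  qed
  finally show ?case .
qed

definition geodesic :: "'a list \<Rightarrow> bool" where
  "geodesic v \<longleftrightarrow> v \<in> lists S \<and> (\<forall>v'\<in>lists S. v' \<approx> v \<longrightarrow> length v \<le> length v')"

lemma geodesic_lists: "geodesic v \<Longrightarrow> v \<in> lists S" by (simp add: geodesic_def)

lemma geodesic_edge_refl_distinct:
  assumes g: "geodesic v" and u: "u \<in> lists S" and ij: "i < j" "j < length v"
  shows "edge_refl u v i \<noteq> edge_refl u v j"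
proof
  assume eq: "edge_refl u v i = edge_refl u v j"
  obtain p c q d rest where v: "v = p @ [c] @ q @ [d] @ rest" and lp: "length p = i"
    and lq: "length q = j - i - 1"
    using list_split_two[OF ij] by blast
  have vl: "v \<in> lists S" using g geodesic_lists by auto
  hence pl: "p \<in> lists S" and cS: "c \<in> S" and ql: "q \<in> lists S" and dS: "d \<in> S"
    and rl: "rest \<in> lists S" using v by auto
  have ti: "take i v = p" "v ! i = c" using v lp by auto
  have jj: "j = Suc (length p + length q)" using lp lq ij by simp
  have tj: "take j v = p @ [c] @ q" "v ! j = d" using v jj
    by (auto simp: nth_append)
  have "u @ p @ [c] @ rev (u @ p) \<approx> u @ (p @ [c] @ q) @ [d] @ rev (u @ (p @ [c] @ q))"
    using eq unfolding edge_refl_def ti tj by (simp add: cls_eq_iff)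
  hence e1: "(u @ p) @ ([c] @ (rev p @ rev u)) \<approx> (u @ p) @ (([c] @ q @ [d] @ rev q @ [c]) @ (rev p @ rev u))"
    by simp
  have up: "u @ p \<in> lists S" using u pl by simp
  have e2: "[c] @ (rev p @ rev u) \<approx> ([c] @ q @ [d] @ rev q @ [c]) @ (rev p @ rev u)"
    using e1 by (rule eqv_cancel_left[OF up])
  have rpu: "rev p @ rev u \<in> lists S" using u pl by (auto simp: in_lists_conv_set)
  have e3': "[c] \<approx> ([c] @ q @ [d] @ rev q @ [c])"
    using e2 by (rule eqv_cancel_right[OF rpu])
  have e3: "[] @ [c] \<approx> ([c] @ q @ [d] @ rev q) @ [c]"
    using e3' by simp
  have cl: "[c] \<in> lists S" using cS by simp
  have h: "[] \<approx> [c] @ q @ [d] @ rev q" using e3 by (rule eqv_cancel_right[OF cl])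
  have "q \<approx> ([c] @ q @ [d] @ rev q) @ q" using eqv_append[OF h eqv_refl[of q]] by simp
  also have "\<dots> = ([c] @ q @ [d]) @ (rev q @ q)" by simp
  also have "\<dots> \<approx> ([c] @ q @ [d]) @ []" using eqv_append[OF eqv_refl rev_append_eqv_Nil[OF ql]] .
  finally have "q \<approx> [c] @ q @ [d]" by simp
  hence "p @ q @ rest \<approx> p @ ([c] @ q @ [d]) @ rest" by (rule eqv_context)
  hence "p @ q @ rest \<approx> v" using v by simp
  moreover have "p @ q @ rest \<in> lists S" using pl ql rl by simp
  ultimately have "length v \<le> length (p @ q @ rest)" using g unfolding geodesic_def by blast
  then show False using v by simp
qed

lemma geodesic_odd_crossings: "geodesic v \<Longrightarrow> u \<in> lists S \<Longrightarrow> odd_crossings u v = {edge_refl u v i | i. i < length v}"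
  by (rule odd_crossings_distinct) (use geodesic_edge_refl_distinct in blast)

lemma geodesic_take: "geodesic v \<Longrightarrow> geodesic (take i v)"
proof -
  assume g: "geodesic v"
  have vl: "v \<in> lists S" using g geodesic_lists by auto
  show "geodesic (take i v)" unfolding geodesic_def
  proof (intro conjI ballI impI)
    show "take i v \<in> lists S" using vl by (auto simp: in_lists_conv_set dest: in_set_takeD)
  next
    fix v' assume v': "v' \<in> lists S" "v' \<approx> take i v"
    have "v' @ drop i v \<approx> take i v @ drop i v" using eqv_append[OF v'(2) eqv_refl] .
    hence "v' @ drop i v \<approx> v" by simp
    moreover have "v' @ drop i v \<in> lists S" using v' vl
      by (auto simp: in_lists_conv_set dest: in_set_dropD)
    ultimately have "length v \<le> length (v' @ drop i v)" using g unfolding geodesic_def by blast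
    then show "length (take i v) \<le> length v'" by (cases "i \<le> length v") auto
  qed
qed

lemma geodesic_exists: "v \<in> lists S \<Longrightarrow> \<exists>g. geodesic g \<and> g \<approx> v"
proof -
  assume vl: "v \<in> lists S"
  let ?P = "\<lambda>n. \<exists>g\<in>lists S. g \<approx> v \<and> length g = n"
  have P0: "?P (length v)" using vl by auto
  define n where "n = (LEAST n. ?P n)"
  have n: "?P n" unfolding n_def using P0 by (rule LeastI)
  have least: "\<And>m. ?P m \<Longrightarrow> n \<le> m" unfolding n_def by (rule Least_le)
  from n obtain g where g: "g \<in> lists S" "g \<approx> v" "length g = n" by blast
  have "geodesic g" unfolding geodesic_def
  proof (intro conjI ballI impI)
    show "g \<in> lists S" using g by simp
  next
    fix v' assume "v' \<in> lists S" "v' \<approx> g"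
    hence "?P (length v')" using g eqv_trans by blast
    then show "length g \<le> length v'" using least g by simp
  qed
  then show ?thesis using g by blast
qed

lemma odd_crossings_conj:
  "g \<in> lists S \<Longrightarrow>
    cls S E (g @ z @ rev g) \<in> odd_crossings (g @ u) h \<longleftrightarrow> cls S E z \<in> odd_crossings u h"
proof (induction h arbitrary: u)
  case Nil
  then show ?case by simp
next
  case (Cons a h)
  have e: "(cls S E (g @ z @ rev g) = cls S E ((g @ u) @ [a] @ rev (g @ u)))
      = (cls S E z = cls S E (u @ [a] @ rev u))"
  proof -
    have "(g @ u) @ [a] @ rev (g @ u) = g @ (u @ [a] @ rev u) @ rev g" by simp
    moreover have "(g @ z @ rev g \<approx> g @ (u @ [a] @ rev u) @ rev g) = (z \<approx> u @ [a] @ rev u)"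
      using eqv_conj_cancel[OF Cons.prems] eqv_context by blast
    ultimately show ?thesis by (simp only: cls_eq_iff)
  qed
  have "odd_crossings (g @ u @ [a]) h = odd_crossings (g @ (u @ [a])) h" by simp
  then show ?case using e Cons.IH[of "u @ [a]"] Cons.prems by simp
qed

abbreviation inversions where "inversions v \<equiv> odd_crossings [] v"

lemma inversions_append: "inversions (x @ y) = sym_diff (inversions x) (odd_crossings x y)"
  using odd_crossings_append[of "[]" x y] by simp

lemma inversions_append_reflection:
  assumes y: "y \<in> lists S" and r: "cls S E (y @ [c] @ rev y) = cls S E \<rho>"
  shows "inversions (y @ [c]) = sym_diff (inversions \<rho>) (odd_crossings \<rho> y)"
proof -
  have "y @ [c] \<approx> (y @ [c] @ rev y) @ y"
    using eqv_append[OF eqv_refl[of "y @ [c]"] eqv_sym[OF rev_append_eqv_Nil[OF y]]] by simp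
  also have "\<dots> \<approx> \<rho> @ y"
  proof (rule eqv_append)
    show "y @ [c] @ rev y \<approx> \<rho>" using r by (simp only: cls_eq_iff)
  qed simp
  finally have "inversions (y @ [c]) = inversions (\<rho> @ y)" by (rule odd_crossings_eqv)
  then show ?thesis by (simp only: inversions_append[of \<rho>])
qed

lemma inversions_conj:
  assumes "g \<in> lists S" "cls S E (g @ z @ rev g) \<notin> inversions g"
  shows "cls S E (g @ z @ rev g) \<in> inversions (g @ h) \<longleftrightarrow> cls S E z \<in> inversions h"
  using assms inversions_append[of g h] odd_crossings_conj[of g z "[]" h] by auto

lemma edge_refl_reflection:
  "u \<in> lists S \<Longrightarrow> v \<in> lists S \<Longrightarrow> k < length v \<Longrightarrow> edge_refl u v k \<in> reflections S E"
  unfolding reflections_def edge_refl_def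
  by (rule CollectI, rule exI[of _ "u @ take k v"], rule exI[of _ "v ! k"])
     (simp add: lists_take lists_nth)

lemma edge_refl_cong: "u \<approx> u' \<Longrightarrow> edge_refl u v k = edge_refl u' v k"
proof -
  assume h: "u \<approx> u'"
  have "(u @ take k v) @ [v ! k] @ rev (u @ take k v) \<approx> (u' @ take k v) @ [v ! k] @ rev (u' @ take k v)"
    using h by (intro eqv_append eqv_rev) auto
  then show ?thesis unfolding edge_refl_def by (simp add: cls_eq_iff)
qed

lemma edge_refl_append_left: "i < length p \<Longrightarrow> edge_refl u (p @ q) i = edge_refl u p i"
  by (simp add: edge_refl_def nth_append)

lemma edge_refl_append_right: "edge_refl u (p @ q) (length p + i) = edge_refl (u @ p) q i"
  by (simp add: edge_refl_def nth_append)

lemma edge_refl_swap: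
  assumes e: "E a b"
  shows "edge_refl [] (p @ [b, a] @ q) (length p) = edge_refl [] (p @ [a, b] @ q) (Suc (length p))"
    and "edge_refl [] (p @ [b, a] @ q) (Suc (length p)) = edge_refl [] (p @ [a, b] @ q) (length p)"
    and "j \<noteq> length p \<Longrightarrow> j \<noteq> Suc (length p) \<Longrightarrow>
      edge_refl [] (p @ [b, a] @ q) j = edge_refl [] (p @ [a, b] @ q) j"
proof -
  have conj: "edge_refl [] (p @ c # d # q) (length p) = cls S E (p @ [c] @ rev p)"
    "edge_refl [] (p @ c # d # q) (Suc (length p)) = cls S E (p @ [c, d, c] @ rev p)" for c d
    by (simp_all add: edge_refl_def nth_append)
  show "edge_refl [] (p @ [b, a] @ q) (length p) = edge_refl [] (p @ [a, b] @ q) (Suc (length p))"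
    using eqv_context[OF eqv_commuting_conj[OF e], of p "rev p"] by (simp add: conj cls_eq_iff eqv_sym)
  show "edge_refl [] (p @ [b, a] @ q) (Suc (length p)) = edge_refl [] (p @ [a, b] @ q) (length p)"
    using eqv_context[OF eqv_commuting_conj[OF E_sym[OF e]], of p "rev p"] by (simp add: conj cls_eq_iff)
  assume j: "j \<noteq> length p" "j \<noteq> Suc (length p)"
  show "edge_refl [] (p @ [b, a] @ q) j = edge_refl [] (p @ [a, b] @ q) j"
  proof (cases "j < length p")
    case True
    then show ?thesis using edge_refl_append_left[of j p "[] :: 'a list"] by (simp add: edge_refl_def nth_append)
  next
    case False
    then have "length p + 2 \<le> j" using j by simp
    then obtain i where "j = length p + 2 + i" using le_Suc_ex by blast
    then have i: "j = length (p @ [b, a]) + i" "j = length (p @ [a, b]) + i" by simp_all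
    have "p @ [b, a] \<approx> p @ [a, b]"
      using eqv_context[OF eqv_swap[OF E_sym[OF e]], of p "[]"] by simp
    then show ?thesis
      using edge_refl_append_right[of "[]" "p @ [b, a]" q i] edge_refl_append_right[of "[]" "p @ [a, b]" q i]
        edge_refl_cong i by (metis append.assoc append_Cons append_Nil)
  qed
qed

lemma geodesic_inversions_take:
  "geodesic g \<Longrightarrow> j \<le> length g \<Longrightarrow> inversions (take j g) = edge_refl [] g ` {..<j}"
proof -
  assume g: "geodesic g" and j: "j \<le> length g"
  have "inversions (take j g) = {edge_refl [] (take j g) i | i. i < length (take j g)}"
    using geodesic_odd_crossings[OF geodesic_take[OF g]] by simp
  also have "\<dots> = (\<lambda>i. edge_refl [] (take j g) i) ` {..<j}" using j by auto
  also have "\<dots> = (\<lambda>i. edge_refl [] g i) ` {..<j}"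
    by (intro image_cong) (auto simp: edge_refl_def min_def)
  finally show ?thesis .
qed

lemma geodesic_inversions: "geodesic g \<Longrightarrow> inversions g = (\<lambda>i. edge_refl [] g i) ` {..<length g}"
  using geodesic_inversions_take[of g "length g"] by simp

section \<open>Walls\<close>

lemma edge_refl_unique:
  assumes "v \<in> lists S" "v' \<in> lists S"
    "{cls S E v, cls S E (v @ [s])} = {cls S E v', cls S E (v' @ [s'])}"
  shows "cls S E (v @ [s] @ rev v) = cls S E (v' @ [s'] @ rev v')"
proof -
  from assms(3) consider "cls S E v = cls S E v'" "cls S E (v @ [s]) = cls S E (v' @ [s'])"
    | "cls S E v = cls S E (v' @ [s'])" "cls S E (v @ [s]) = cls S E v'"
    by (auto simp: doubleton_eq_iff)
  then show ?thesis
  proof cases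
    case 1
    hence a: "v \<approx> v'" and b: "v @ [s] \<approx> v' @ [s']" by (simp_all add: cls_eq_iff)
    have "(v @ [s]) @ rev v \<approx> (v' @ [s']) @ rev v'" using eqv_append[OF b eqv_rev[OF a]] .
    then show ?thesis by (simp add: cls_eq_iff)
  next
    case 2
    hence a: "v \<approx> v' @ [s']" and b: "v @ [s] \<approx> v'" by (simp_all add: cls_eq_iff)
    have "(v @ [s]) @ rev v \<approx> v' @ rev (v' @ [s'])" using eqv_append[OF b eqv_rev[OF a]] .
    then show ?thesis by (simp add: cls_eq_iff)
  qed
qed

lemma edge_in_wall_iff:
  assumes "v \<in> lists S" "s \<in> S"
  shows "{cls S E v, cls S E (v @ [s])} \<in> wall S E r \<longleftrightarrow> cls S E (v @ [s] @ rev v) = r"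
proof
  assume "{cls S E v, cls S E (v @ [s])} \<in> wall S E r"
  then obtain v' s' where "v' \<in> lists S" "s' \<in> S" "cls S E (v' @ [s'] @ rev v') = r"
    "{cls S E v, cls S E (v @ [s])} = {cls S E v', cls S E (v' @ [s'])}"
    unfolding wall_def by blast
  then show "cls S E (v @ [s] @ rev v) = r" using edge_refl_unique assms by metis
next
  assume "cls S E (v @ [s] @ rev v) = r"
  then show "{cls S E v, cls S E (v @ [s])} \<in> wall S E r" using assms unfolding wall_def by blast
qed

lemma wall_inj:
  assumes "r \<in> reflections S E" "wall S E r = wall S E r'"
  shows "r = r'"
proof -
  obtain v s where v: "v \<in> lists S" "s \<in> S" "r = cls S E (v @ [s] @ rev v)"
    using assms(1) unfolding reflections_def by blast
  hence "{cls S E v, cls S E (v @ [s])} \<in> wall S E r" using edge_in_wall_iff by simp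
  hence "{cls S E v, cls S E (v @ [s])} \<in> wall S E r'" using assms by simp
  then show ?thesis using edge_in_wall_iff v by simp
qed

lemma edge_in_wall_edge_refl:
  assumes "u \<in> lists S" "v \<in> lists S" "i < length v"
  shows "{cls S E (u @ take i v), cls S E (u @ take (Suc i) v)} \<in> wall S E r \<longleftrightarrow>
    edge_refl u v i = r"
proof -
  have "u @ take i v \<in> lists S" "v ! i \<in> S"
    using assms by (auto simp: in_lists_conv_set dest: in_set_takeD)
  then show ?thesis
    using edge_in_wall_iff[of "u @ take i v" "v ! i" r] assms(3)
    by (simp add: take_Suc_conv_app_nth edge_refl_def)
qed

lemma path_uses_wall_iff:
  "u \<in> lists S \<Longrightarrow> v \<in> lists S \<Longrightarrow>
    path_uses S E u v (wall S E r) \<longleftrightarrow> (\<exists>i<length v. edge_refl u v i = r)"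
  unfolding path_uses_def using edge_in_wall_edge_refl by blast

lemma separates_iff_inversions:
  assumes x: "x \<in> lists S" and z: "z \<in> lists S"
  shows "separates S E (wall S E r) (cls S E x) (cls S E z) \<longleftrightarrow>
    r \<in> sym_diff (inversions x) (inversions z)"
proof
  assume sep: "separates S E (wall S E r) (cls S E x) (cls S E z)"
  obtain g where g: "geodesic g" "g \<approx> rev x @ z"
    using geodesic_exists x z lists_rev by (metis append_in_lists_conv)
  have gl: "g \<in> lists S" using g geodesic_lists by auto
  have "x @ g \<approx> x @ (rev x @ z)" using eqv_append[OF eqv_refl g(2)] .
  also have "\<dots> = (x @ rev x) @ z" by simp
  also have "\<dots> \<approx> [] @ z" using eqv_append[OF append_rev_eqv_Nil[OF x] eqv_refl] .
  finally have xg: "x @ g \<approx> z" by simp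
  have "path_uses S E x g (wall S E r)"
    using sep x gl xg eqv_refl unfolding separates_def cls_eq_iff by blast
  then have "r \<in> odd_crossings x g"
    using geodesic_odd_crossings[OF g(1) x] path_uses_wall_iff[OF x gl] by auto
  moreover have "inversions z = sym_diff (inversions x) (odd_crossings x g)"
    using inversions_append[of x g] odd_crossings_eqv[OF xg] by simp
  ultimately show "r \<in> sym_diff (inversions x) (inversions z)" by auto
next
  assume r: "r \<in> sym_diff (inversions x) (inversions z)"
  show "separates S E (wall S E r) (cls S E x) (cls S E z)"
    unfolding separates_def
  proof (intro ballI impI)
    fix u v assume u: "u \<in> lists S" and v: "v \<in> lists S"
      and "cls S E u = cls S E x" "cls S E (u @ v) = cls S E z"
    then have "inversions u = inversions x" "inversions (u @ v) = inversions z"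
      using odd_crossings_eqv by (simp_all add: cls_eq_iff)
    then have "r \<in> odd_crossings u v" using r inversions_append[of u v] by auto
    then show "path_uses S E u v (wall S E r)"
      using odd_crossings_edge_refl path_uses_wall_iff[OF u v] by blast
  qed
qed

lemma ball_doubletons:
  "(\<forall>e\<in>{{f v s, g v s} | v s. P1 v \<and> P2 s \<and> P3 v s}. \<forall>x\<in>e. Q x) \<longleftrightarrow>
    (\<forall>v s. P1 v \<longrightarrow> P2 s \<longrightarrow> P3 v s \<longrightarrow> Q (f v s) \<and> Q (g v s))"
  by blast

lemma wall_less_iff_inversions:
  assumes x0: "x0 \<in> lists S"
  shows "wall_less S E (cls S E x0) (wall S E r) (wall S E r') \<longleftrightarrow>
    (\<forall>v s. v \<in> lists S \<longrightarrow> s \<in> S \<longrightarrow> cls S E (v @ [s] @ rev v) = r' \<longrightarrow>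
       r \<in> sym_diff (inversions x0) (inversions v) \<and>
       r \<in> sym_diff (inversions x0) (inversions (v @ [s])))"
proof -
  have "wall_less S E (cls S E x0) (wall S E r) (wall S E r') \<longleftrightarrow>
    (\<forall>v s. v \<in> lists S \<longrightarrow> s \<in> S \<longrightarrow> cls S E (v @ [s] @ rev v) = r' \<longrightarrow>
       separates S E (wall S E r) (cls S E x0) (cls S E v) \<and>
       separates S E (wall S E r) (cls S E x0) (cls S E (v @ [s])))"
    unfolding wall_less_def wall_def by (rule ball_doubletons)
  then show ?thesis by (auto simp: separates_iff_inversions[OF x0])
qed

end

section \<open>The infinite dihedral group\<close>

locale infinite_dihedral = right_angled_coxeter S E for S :: "'a set" and E +
  fixes a b :: 'a
  assumes aS: "a \<in> S" and bS: "b \<in> S" and ab: "a \<noteq> b" and nEab: "\<not> E a b"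
begin

definition ab_pow :: "nat \<Rightarrow> 'a list" where "ab_pow n = concat (replicate n [a, b])"
definition ba_pow :: "nat \<Rightarrow> 'a list" where "ba_pow n = concat (replicate n [b, a])"
definition dihedral_refl :: "nat \<Rightarrow> 'a list" where "dihedral_refl n = ab_pow n @ [a]"

lemma ab_pow_0[simp]: "ab_pow 0 = []" by (simp add: ab_pow_def)
lemma ba_pow_0[simp]: "ba_pow 0 = []" by (simp add: ba_pow_def)

lemma ab_pow_Suc: "ab_pow (Suc n) = [a, b] @ ab_pow n" by (simp add: ab_pow_def)
lemma ab_pow_Suc_right: "ab_pow (Suc n) = ab_pow n @ [a, b]" by (simp add: ab_pow_def replicate_append_same[symmetric])
lemma ba_pow_Suc: "ba_pow (Suc n) = [b, a] @ ba_pow n" by (simp add: ba_pow_def)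

lemma ab_pow_append_a: "ab_pow n @ [a] = [a] @ ba_pow n"
  by (induction n) (simp_all add: ab_pow_Suc ba_pow_Suc)

lemma rev_ab_pow: "rev (ab_pow n) = ba_pow n"
  by (induction n) (simp_all add: ab_pow_Suc_right ba_pow_Suc)

lemma rev_dihedral_refl: "rev (dihedral_refl n) = dihedral_refl n"
proof -
  have "rev (dihedral_refl n) = [a] @ rev (ab_pow n)" by (simp add: dihedral_refl_def)
  also have "\<dots> = ab_pow n @ [a]" by (simp only: rev_ab_pow ab_pow_append_a)
  finally show ?thesis by (simp add: dihedral_refl_def)
qed

lemma ab_pow_lists: "ab_pow n \<in> lists S" by (induction n) (simp_all add: ab_pow_Suc aS bS)
lemma dihedral_refl_lists: "dihedral_refl n \<in> lists S" using ab_pow_lists aS by (simp add: dihedral_refl_def)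

lemma dihedral_refl_involution: "dihedral_refl n @ dihedral_refl n \<approx> []"
  using append_rev_eqv_Nil[OF dihedral_refl_lists[of n]] rev_dihedral_refl by simp

lemma a_ab_pow_a: "[a] @ ab_pow n @ [a] \<approx> rev (ab_pow n)"
proof -
  have "[a] @ ab_pow n @ [a] = [a, a] @ ba_pow n" using ab_pow_append_a by simp
  also have "\<dots> \<approx> [] @ ba_pow n" using eqv_append[OF eqv_double[OF aS] eqv_refl] .
  finally show ?thesis by (simp add: rev_ab_pow)
qed

lemma dihedral_refl_conj_up: "dihedral_refl (Suc n) @ dihedral_refl n @ dihedral_refl (Suc n) \<approx> dihedral_refl (Suc (Suc n))"
proof -
  have "dihedral_refl (Suc n) @ dihedral_refl n @ dihedral_refl (Suc n) = ab_pow (Suc n) @ ([a] @ ab_pow n @ [a]) @ ab_pow (Suc n) @ [a]"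
    by (simp add: dihedral_refl_def)
  also have "\<dots> \<approx> ab_pow (Suc n) @ rev (ab_pow n) @ ab_pow (Suc n) @ [a]"
    using eqv_context[OF a_ab_pow_a] by simp
  also have "\<dots> = ab_pow (Suc n) @ (rev (ab_pow n) @ ab_pow n) @ [a, b] @ [a]" by (simp add: ab_pow_Suc_right)
  also have "\<dots> \<approx> ab_pow (Suc n) @ [] @ [a, b] @ [a]" using eqv_context[OF rev_append_eqv_Nil[OF ab_pow_lists]] by blast
  also have "\<dots> = dihedral_refl (Suc (Suc n))" by (simp add: dihedral_refl_def ab_pow_Suc_right[of "Suc n"])
  finally show ?thesis .
qed

lemma dihedral_refl_conj_down:
  "dihedral_refl (Suc n) @ dihedral_refl (Suc (Suc n)) @ dihedral_refl (Suc n) \<approx> dihedral_refl n"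
proof -
  let ?r = "dihedral_refl (Suc n)"
  have "?r @ dihedral_refl (Suc (Suc n)) @ ?r \<approx> ?r @ (?r @ dihedral_refl n @ ?r) @ ?r"
    using eqv_context[OF eqv_sym[OF dihedral_refl_conj_up]] by blast
  also have "\<dots> = (?r @ ?r) @ dihedral_refl n @ (?r @ ?r)" by simp
  also have "\<dots> \<approx> [] @ dihedral_refl n @ []"
    using eqv_append[OF dihedral_refl_involution eqv_append[OF eqv_refl dihedral_refl_involution]] .
  finally show ?thesis by simp
qed

text \<open>\<open>a\<close> and \<open>b\<close> act on \<open>\<int>\<close> as the reflections in \<open>0\<close> and \<open>1\<close>, all other generators trivially;
  then \<open>dihedral_refl n\<close> maps \<open>0\<close> to \<open>-2n\<close>, so these reflections are pairwise distinct.\<close>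

definition act_letter :: "'a \<Rightarrow> int \<Rightarrow> int" where
  "act_letter c = (if c = a then (\<lambda>x. - x) else if c = b then (\<lambda>x. 2 - x) else id)"

fun act_word :: "'a list \<Rightarrow> int \<Rightarrow> int" where
  "act_word [] = id"
| "act_word (c # v) = act_letter c \<circ> act_word v"

lemma act_word_append: "act_word (v @ w) = act_word v \<circ> act_word w"
  by (induction v) auto

lemma act_letter_involution: "act_letter c \<circ> act_letter c = id"
  by (auto simp: act_letter_def fun_eq_iff)

lemma act_letter_commute: "E s t \<Longrightarrow> act_letter s \<circ> act_letter t = act_letter t \<circ> act_letter s"
proof -
  assume st: "E s t"
  have "s \<noteq> t" using st E_irrefl by auto
  moreover have "\<not> (s = a \<and> t = b)" using st nEab by auto
  moreover have "\<not> (s = b \<and> t = a)" using st nEab E_sym by auto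
  ultimately show ?thesis by (auto simp: act_letter_def fun_eq_iff)
qed

lemma act_word_rstep: "(v, w) \<in> rstep S E \<Longrightarrow> act_word v = act_word w"
proof (induction rule: rstep.induct)
  case (del s xs ys)
  have "act_word (xs @ [s, s] @ ys) = act_word xs \<circ> (act_letter s \<circ> act_letter s) \<circ> act_word ys"
    by (simp add: act_word_append comp_assoc)
  then show ?case by (simp add: act_letter_involution act_word_append)
next
  case (swap s t xs ys)
  have "act_word (xs @ [s, t] @ ys) = act_word xs \<circ> (act_letter s \<circ> act_letter t) \<circ> act_word ys"
    by (simp add: act_word_append comp_assoc)
  also have "\<dots> = act_word xs \<circ> (act_letter t \<circ> act_letter s) \<circ> act_word ys" using act_letter_commute[OF swap] by simp
  finally show ?case by (simp add: act_word_append comp_assoc)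
qed

lemma act_word_eqv: "v \<approx> w \<Longrightarrow> act_word v = act_word w"
  unfolding eqv_def weq_def
proof (induction rule: rtrancl_induct)
  case base
  then show ?case by simp
next
  case (step y z)
  then show ?case using act_word_rstep by auto
qed

lemma act_word_ab_pow: "act_word (ab_pow n) x = x - 2 * int n"
  by (induction n arbitrary: x) (auto simp: ab_pow_Suc act_letter_def ab[symmetric])

lemma act_word_dihedral_refl: "act_word (dihedral_refl n) 0 = - 2 * int n"
  by (simp add: dihedral_refl_def act_word_append act_word_ab_pow act_letter_def)

lemma dihedral_refl_distinct: "m \<noteq> n \<Longrightarrow> cls S E (dihedral_refl m) \<noteq> cls S E (dihedral_refl n)"
proof
  assume "m \<noteq> n" "cls S E (dihedral_refl m) = cls S E (dihedral_refl n)"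
  hence "act_word (dihedral_refl m) = act_word (dihedral_refl n)" using act_word_eqv by (simp add: cls_eq_iff)
  hence "act_word (dihedral_refl m) 0 = act_word (dihedral_refl n) 0" by simp
  then show False using \<open>m \<noteq> n\<close> by (simp add: act_word_dihedral_refl)
qed

definition alternating :: "nat \<Rightarrow> 'a list" where
  "alternating L = map (\<lambda>k. if even k then a else b) [0..<L]"

lemma alternating_Suc: "alternating (Suc L) = alternating L @ [if even L then a else b]"
  by (simp add: alternating_def)

lemma ab_pow_alternating: "ab_pow n = alternating (2 * n)"
proof (induction n)
  case 0
  then show ?case by (simp add: alternating_def)
next
  case (Suc n)
  have "alternating (2 * Suc n) = alternating (Suc (Suc (2 * n)))" by simp
  also have "\<dots> = alternating (2 * n) @ [a, b]" by (simp only: alternating_Suc) simp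
  finally show ?case using Suc by (simp add: ab_pow_Suc_right)
qed

lemma dihedral_refl_alternating: "dihedral_refl n = alternating (2 * n + 1)"
  by (simp add: dihedral_refl_def ab_pow_alternating alternating_Suc)

lemma alternating_edge_word:
  assumes i: "i < L"
  shows "take i (alternating L) @ [alternating L ! i] @ rev (take i (alternating L)) =
    alternating (2 * i + 1)"
proof -
  let ?f = "\<lambda>k::nat. if even k then a else b"
  have "take i (alternating L) = alternating i" "alternating L ! i = ?f i"
    using i by (simp_all add: alternating_def take_map del: upt_Suc)
  moreover have "alternating i @ [?f i] @ rev (alternating i) = alternating (2 * i + 1)"
  proof (rule nth_equalityI)
    show "length (alternating i @ [?f i] @ rev (alternating i)) = length (alternating (2 * i + 1))"
      by (simp add: alternating_def)
    fix k assume "k < length (alternating i @ [?f i] @ rev (alternating i))"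
    then have k: "k < 2 * i + 1" by (simp add: alternating_def)
    have "(alternating i @ [?f i] @ rev (alternating i)) ! k = ?f k"
    proof (cases "k \<le> i")
      case True
      then show ?thesis by (cases "k = i") (simp_all add: nth_append alternating_def del: upt_Suc)
    next
      case False
      then have "(alternating i @ [?f i] @ rev (alternating i)) ! k = ?f (2 * i - k)"
        using k by (simp add: nth_append rev_nth alternating_def del: upt_Suc)
      moreover have "even (2 * i - k) \<longleftrightarrow> even k" using False k by presburger
      ultimately show ?thesis by simp
    qed
    then show "(alternating i @ [?f i] @ rev (alternating i)) ! k = alternating (2 * i + 1) ! k"
      using k by (simp add: alternating_def del: upt_Suc)
  qed
  ultimately show ?thesis by simp
qed

lemma dihedral_refl_edge_word:
  assumes "i < 2 * m + 1"
  shows "take i (dihedral_refl m) @ [dihedral_refl m ! i] @ rev (take i (dihedral_refl m)) = dihedral_refl i"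
  using alternating_edge_word[OF assms] by (simp add: dihedral_refl_alternating)

lemma inversions_dihedral_refl: "inversions (dihedral_refl m) = {cls S E (dihedral_refl i) | i. i < 2 * m + 1}"
proof -
  have len: "length (dihedral_refl m) = 2 * m + 1" by (simp add: dihedral_refl_alternating alternating_def)
  have r: "\<And>i. i < 2 * m + 1 \<Longrightarrow> edge_refl [] (dihedral_refl m) i = cls S E (dihedral_refl i)"
    using dihedral_refl_edge_word by (simp add: edge_refl_def)
  have "odd_crossings [] (dihedral_refl m) = {edge_refl [] (dihedral_refl m) i | i. i < length (dihedral_refl m)}"
    by (rule odd_crossings_distinct) (use r dihedral_refl_distinct len in auto)
  also have "\<dots> = (\<lambda>i. edge_refl [] (dihedral_refl m) i) ` {..<2 * m + 1}" using len by auto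
  also have "\<dots> = (\<lambda>i. cls S E (dihedral_refl i)) ` {..<2 * m + 1}" using r by (intro image_cong) auto
  also have "\<dots> = {cls S E (dihedral_refl i) | i. i < 2 * m + 1}" by auto
  finally show ?thesis .
qed

lemma dihedral_refl_in_inversions_Suc: "cls S E (dihedral_refl n) \<in> inversions (dihedral_refl (Suc n))"
  using inversions_dihedral_refl[of "Suc n"] by auto

text \<open>Write \<open>r\<^sub>n = (ab)\<^sup>na\<close>.  If \<open>r\<^sub>n\<close> is not an inversion of \<open>v\<close>, reflect the part of a geodesic for
  \<open>v\<close> before its crossing with the wall of \<open>r\<^sub>n\<^sub>+\<^sub>1\<close> in that wall: since \<open>r\<^sub>n\<^sub>+\<^sub>1 r\<^sub>n r\<^sub>n\<^sub>+\<^sub>1 = r\<^sub>n\<^sub>+\<^sub>2\<close>,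
  the shorter part crosses the wall of \<open>r\<^sub>n\<^sub>+\<^sub>2\<close>, hence by induction that of \<open>r\<^sub>n\<^sub>+\<^sub>1\<close>.\<close>

lemma dihedral_refl_inversion_down_geodesic:
  "geodesic v \<Longrightarrow> cls S E (dihedral_refl (Suc n)) \<in> inversions v \<Longrightarrow>
    cls S E (dihedral_refl n) \<in> inversions v"
proof (induction "length v" arbitrary: v n rule: less_induct)
  case less
  let ?r = "\<lambda>k. cls S E (dihedral_refl k)"
  obtain i where i: "i < length v" "edge_refl [] v i = ?r (Suc n)"
    using less.prems geodesic_inversions by auto
  let ?y = "take i v" and ?c = "v ! i"
  have gy: "geodesic ?y" using geodesic_take less.prems(1) by blast
  have yl: "?y \<in> lists S" using gy geodesic_lists by auto
  have notin: "?r (Suc n) \<notin> inversions ?y"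
    using geodesic_inversions_take[OF less.prems(1), of i] geodesic_edge_refl_distinct[OF less.prems(1) lists.Nil]
      i by (auto simp: eq_commute)
  show ?case
  proof (rule ccontr)
    assume "?r n \<notin> inversions v"
    moreover have "inversions (?y @ [?c]) \<subseteq> inversions v"
      using geodesic_inversions_take[OF less.prems(1), of "Suc i"] geodesic_inversions[OF less.prems(1)] i(1)
      by (auto simp: take_Suc_conv_app_nth)
    moreover have "inversions (?y @ [?c]) =
        sym_diff (inversions (dihedral_refl (Suc n))) (odd_crossings (dihedral_refl (Suc n)) ?y)"
      using inversions_append_reflection[OF yl] i(2) by (simp add: edge_refl_def)
    ultimately have "?r n \<in> odd_crossings (dihedral_refl (Suc n) @ []) ?y"
      using dihedral_refl_in_inversions_Suc[of n] by auto
    moreover have "cls S E (dihedral_refl (Suc n) @ dihedral_refl (Suc (Suc n)) @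
        rev (dihedral_refl (Suc n))) = ?r n"
      using dihedral_refl_conj_down[of n] by (simp add: rev_dihedral_refl cls_eq_iff)
    ultimately have "?r (Suc (Suc n)) \<in> inversions ?y"
      using odd_crossings_conj[OF dihedral_refl_lists, of "Suc n" "dihedral_refl (Suc (Suc n))" "[]" ?y]
      by simp
    then have "?r (Suc n) \<in> inversions ?y" using less.hyps[of ?y "Suc n"] i(1) gy by simp
    with notin show False ..
  qed
qed

lemma dihedral_refl_inversion_down:
  "x \<in> lists S \<Longrightarrow> cls S E (dihedral_refl (Suc n)) \<in> inversions x \<Longrightarrow>
    cls S E (dihedral_refl n) \<in> inversions x"
proof -
  assume x: "x \<in> lists S" and h: "cls S E (dihedral_refl (Suc n)) \<in> inversions x"
  obtain g where g: "geodesic g" "g \<approx> x" using geodesic_exists[OF x] by blast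
  have "inversions g = inversions x" using odd_crossings_eqv[OF g(2)] by simp
  then show ?thesis using dihedral_refl_inversion_down_geodesic[OF g(1)] h by simp
qed

lemma wall_a_nested_aba:
  assumes h: "h \<in> lists S" and c: "c \<in> S" and r: "cls S E (h @ [c] @ rev h) = cls S E (dihedral_refl 1)"
  shows "cls S E (dihedral_refl 0) \<in> inversions h \<and> cls S E (dihedral_refl 0) \<in> inversions (h @ [c])"
proof -
  have N1: "inversions (h @ [c]) = sym_diff (inversions h) {cls S E (dihedral_refl 1)}"
    using inversions_append[of h "[c]"] r by simp
  have d: "cls S E (dihedral_refl 0) \<noteq> cls S E (dihedral_refl 1)" using dihedral_refl_distinct by simp
  have hc: "h @ [c] \<in> lists S" using h c by simp
  show ?thesis
  proof (cases "cls S E (dihedral_refl 1) \<in> inversions h")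
    case True
    hence "cls S E (dihedral_refl 0) \<in> inversions h" using dihedral_refl_inversion_down[OF h, of 0] by simp
    then show ?thesis using N1 d by simp
  next
    case False
    hence "cls S E (dihedral_refl 1) \<in> inversions (h @ [c])" using N1 by simp
    hence "cls S E (dihedral_refl 0) \<in> inversions (h @ [c])" using dihedral_refl_inversion_down[OF hc, of 0] by simp
    then show ?thesis using N1 d by simp
  qed
qed

end

context right_angled_coxeter
begin

lemma geodesic_adjacent_distinct:
  assumes g: "geodesic v" and j: "Suc j < length v"
  shows "v ! j \<noteq> v ! Suc j"
proof
  assume eq: "v ! j = v ! Suc j"
  let ?p = "take j v" and ?q = "drop (Suc (Suc j)) v"
  have "v = ?p @ v ! j # drop (Suc j) v" using j by (rule id_take_nth_drop[OF Suc_lessD])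
  moreover have "drop (Suc j) v = v ! Suc j # ?q" using j by (simp add: Cons_nth_drop_Suc)
  ultimately have v: "v = ?p @ [v ! j, v ! j] @ ?q" using eq by simp
  have vl: "v \<in> lists S" using g geodesic_lists by blast
  then have "?p @ ?q \<in> lists S" using v by (metis append_in_lists_conv)
  moreover have "?p @ [v ! j, v ! j] @ ?q \<approx> ?p @ [] @ ?q"
    using eqv_double lists_nth[OF vl] j by (intro eqv_context) simp
  then have "?p @ ?q \<approx> v" using v eqv_sym by simp
  ultimately have "length v \<le> length (?p @ ?q)"
    using g unfolding geodesic_def by blast
  then show False using j by simp
qed

text \<open>Conjugating by the common prefix reduces this to the infinite dihedral group generated by
  the two letters.\<close>

lemma adjacent_noncommuting_nested:
  assumes g: "geodesic v" and j: "Suc j < length v" and nE: "\<not> E (v ! j) (v ! Suc j)"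
    and y: "y \<in> lists S" and s: "s \<in> S"
    and r: "cls S E (y @ [s] @ rev y) = edge_refl [] v (Suc j)"
  shows "edge_refl [] v j \<in> inversions y \<and> edge_refl [] v j \<in> inversions (y @ [s])"
proof -
  let ?g = "take j v" and ?a = "v ! j" and ?b = "v ! Suc j" and ?h = "rev (take j v) @ y"
  have vl: "v \<in> lists S" using g geodesic_lists by auto
  have gl: "?g \<in> lists S" and hl: "?h \<in> lists S" using vl y lists_take lists_rev by auto
  have aS: "?a \<in> S" and bS: "?b \<in> S" using vl j lists_nth by auto
  have r0: "edge_refl [] v j = cls S E (?g @ [?a] @ rev ?g)"
    unfolding edge_refl_def by simp
  have r1: "edge_refl [] v (Suc j) = cls S E (?g @ [?a, ?b, ?a] @ rev ?g)"
    using j by (simp add: edge_refl_def take_Suc_conv_app_nth)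
  interpret d: infinite_dihedral S E ?a ?b
    using right_angled_coxeter_axioms aS bS geodesic_adjacent_distinct[OF g j] nE
    by (simp add: infinite_dihedral_def infinite_dihedral_axioms_def)
  have cancel: "?g @ rev ?g @ z \<approx> z" for z
    using eqv_append[OF append_rev_eqv_Nil[OF gl] eqv_refl[of z]] by simp
  have "?g @ (?h @ [s] @ rev ?h) @ rev ?g = ?g @ rev ?g @ (y @ [s] @ rev y) @ ?g @ rev ?g"
    by simp
  also have "\<dots> \<approx> y @ [s] @ rev y"
    using cancel eqv_context[OF cancel[of "[]"], of "?g @ rev ?g @ y @ [s] @ rev y" "[]"]
    by (metis append_Nil2 append_assoc eqv_trans)
  finally have "cls S E (?g @ (?h @ [s] @ rev ?h) @ rev ?g) = cls S E (?g @ [?a, ?b, ?a] @ rev ?g)"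
    using r r1 by (simp only: cls_eq_iff[symmetric])
  then have "cls S E (?h @ [s] @ rev ?h) = cls S E (d.dihedral_refl 1)"
    by (simp only: cls_conj_eq_iff[OF gl]) (simp add: d.dihedral_refl_def d.ab_pow_def)
  then have H: "cls S E [?a] \<in> inversions ?h \<and> cls S E [?a] \<in> inversions (?h @ [s])"
    using d.wall_a_nested_aba[OF hl s] by (simp add: d.dihedral_refl_def)
  have notin: "edge_refl [] v j \<notin> inversions ?g"
  proof
    assume "edge_refl [] v j \<in> inversions ?g"
    then obtain i where "i < j" "edge_refl [] v j = edge_refl [] v i"
      using geodesic_inversions_take[OF g, of j] j by auto
    then show False using geodesic_edge_refl_distinct[OF g, of "[]" i j] j by simp
  qed
  have "inversions y = inversions (?g @ ?h)" "inversions (y @ [s]) = inversions (?g @ ?h @ [s])"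
    using odd_crossings_eqv[OF eqv_sym[OF cancel]] by simp_all
  moreover have "edge_refl [] v j \<in> inversions (?g @ x) \<longleftrightarrow> cls S E [?a] \<in> inversions x" for x
    using inversions_conj[OF gl, of "[?a]" x] notin r0 by simp
  ultimately show ?thesis using H by simp
qed

lemma reflection_in_own_inversions:
  assumes v: "v \<in> lists S" and s: "s \<in> S"
  shows "cls S E (v @ [s] @ rev v) \<in> inversions (v @ [s] @ rev v)"
proof -
  let ?\<rho> = "v @ [s] @ rev v"
  have \<rho>l: "?\<rho> \<in> lists S" using v s lists_rev by simp
  have rev\<rho>: "rev ?\<rho> = ?\<rho>" by simp
  have inv: "inversions (v @ rev v) = {}" using odd_crossings_eqv[OF append_rev_eqv_Nil[OF v], of "[]"] by simp
  hence rv: "odd_crossings v (rev v) = inversions v" using inversions_append[of v "rev v"] by auto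
  have vs: "v @ [s] \<approx> ?\<rho> @ v"
  proof -
    have "v @ [s] \<approx> (v @ [s]) @ (rev v @ v)" using eqv_append[OF eqv_refl[of "v @ [s]"] eqv_sym[OF rev_append_eqv_Nil[OF v]]] by simp
    then show ?thesis by simp
  qed
  have "inversions ?\<rho> = sym_diff (inversions v) (odd_crossings v ([s] @ rev v))" by (rule inversions_append)
  also have "odd_crossings v ([s] @ rev v) = sym_diff {cls S E ?\<rho>} (odd_crossings (v @ [s]) (rev v))" by simp
  also have "odd_crossings (v @ [s]) (rev v) = odd_crossings (?\<rho> @ v) (rev v)" using odd_crossings_cong[OF vs] .
  finally have N: "inversions ?\<rho> = sym_diff (inversions v) (sym_diff {cls S E ?\<rho>} (odd_crossings (?\<rho> @ v) (rev v)))" .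
  have "?\<rho> @ ?\<rho> @ rev ?\<rho> \<approx> ?\<rho>"
  proof -
    have "?\<rho> @ (?\<rho> @ rev ?\<rho>) \<approx> ?\<rho> @ []" using eqv_append[OF eqv_refl append_rev_eqv_Nil[OF \<rho>l]] .
    then show ?thesis by simp
  qed
  hence c: "cls S E (?\<rho> @ ?\<rho> @ rev ?\<rho>) = cls S E ?\<rho>" by (simp add: cls_eq_iff)
  have "(cls S E (?\<rho> @ ?\<rho> @ rev ?\<rho>) \<in> odd_crossings (?\<rho> @ v) (rev v)) = (cls S E ?\<rho> \<in> odd_crossings v (rev v))"
    by (rule odd_crossings_conj[OF \<rho>l])
  hence "(cls S E ?\<rho> \<in> odd_crossings (?\<rho> @ v) (rev v)) = (cls S E ?\<rho> \<in> inversions v)" using c rv by simp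
  then show ?thesis using N by simp
qed

lemma commute_el_iff:
  assumes "\<rho> \<in> lists S" "\<rho>' \<in> lists S"
  shows "commute_el S E (cls S E \<rho>) (cls S E \<rho>') \<longleftrightarrow> \<rho> @ \<rho>' \<approx> \<rho>' @ \<rho>"
proof
  assume "commute_el S E (cls S E \<rho>) (cls S E \<rho>')"
  then obtain \<alpha> \<beta> where ab: "\<alpha> \<in> cls S E \<rho>" "\<beta> \<in> cls S E \<rho>'"
      "cls S E (\<alpha> @ \<beta>) = cls S E (\<beta> @ \<alpha>)"
    unfolding commute_el_def by blast
  have ra: "\<rho> \<approx> \<alpha>" and rb: "\<rho>' \<approx> \<beta>" using ab(1,2) unfolding cls_def eqv_def by auto
  have "\<rho> @ \<rho>' \<approx> \<alpha> @ \<beta>" using eqv_append[OF ra rb] .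
  also have "\<dots> \<approx> \<beta> @ \<alpha>" using ab(3) by (simp only: cls_eq_iff)
  also have "\<dots> \<approx> \<rho>' @ \<rho>" using eqv_append[OF eqv_sym[OF rb] eqv_sym[OF ra]] .
  finally show "\<rho> @ \<rho>' \<approx> \<rho>' @ \<rho>" .
next
  assume h: "\<rho> @ \<rho>' \<approx> \<rho>' @ \<rho>"
  show "commute_el S E (cls S E \<rho>) (cls S E \<rho>')"
    unfolding commute_el_def using assms cls_eq_iff[THEN iffD2, OF h] cls_self[of \<rho>] cls_self[of \<rho>'] by blast
qed

lemma commute_el_conj_iff:
  assumes u: "u \<in> lists S" and ab: "a \<in> lists S" "b \<in> lists S"
  shows "commute_el S E (cls S E (u @ a @ rev u)) (cls S E (u @ b @ rev u)) \<longleftrightarrow>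
    commute_el S E (cls S E a) (cls S E b)"
proof -
  have conj_append: "(u @ x @ rev u) @ (u @ y @ rev u) \<approx> u @ (x @ y) @ rev u" for x y
  proof -
    have "(u @ x @ rev u) @ (u @ y @ rev u) = (u @ x) @ (rev u @ u) @ (y @ rev u)" by simp
    also have "\<dots> \<approx> (u @ x) @ [] @ (y @ rev u)" using rev_append_eqv_Nil[OF u] by (rule eqv_context)
    finally show ?thesis by simp
  qed
  have l: "u @ a @ rev u \<in> lists S" "u @ b @ rev u \<in> lists S" using u ab lists_rev by auto
  have "commute_el S E (cls S E (u @ a @ rev u)) (cls S E (u @ b @ rev u)) \<longleftrightarrow>
      u @ (a @ b) @ rev u \<approx> u @ (b @ a) @ rev u"
    unfolding commute_el_iff[OF l] using conj_append eqv_sym eqv_trans by meson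
  also have "\<dots> \<longleftrightarrow> a @ b \<approx> b @ a" using eqv_conj_cancel[OF u] eqv_context by blast
  finally show ?thesis using commute_el_iff[OF ab] by simp
qed

lemma walls_intersect_iff:
  assumes "r \<in> reflections S E" "r' \<in> reflections S E"
  shows "walls_intersect S E (wall S E r) (wall S E r') \<longleftrightarrow> r = r' \<or> commute_el S E r r'"
proof
  assume "walls_intersect S E (wall S E r) (wall S E r')"
  then obtain r0 r0' where h: "r0 \<in> reflections S E" "r0' \<in> reflections S E"
    "wall S E r = wall S E r0" "wall S E r' = wall S E r0'" "r0 = r0' \<or> commute_el S E r0 r0'"
    unfolding walls_intersect_def by blast
  have "r = r0" "r' = r0'" using wall_inj assms h by auto
  then show "r = r' \<or> commute_el S E r r'" using h by simp
next
  assume "r = r' \<or> commute_el S E r r'"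
  then show "walls_intersect S E (wall S E r) (wall S E r')"
    unfolding walls_intersect_def using assms by blast
qed

text \<open>If the wall of \<open>\<rho>'\<close> lies beyond the wall of \<open>\<rho>\<close>, then \<open>\<rho>\<close> and \<open>\<rho>'\<close> do not
  commute: otherwise the wall of \<open>\<rho>'\<close> would also pass through the mirror image under \<open>\<rho>\<close>
  of one of its edges, which lies on the near side of the wall of \<open>\<rho>\<close>.\<close>

lemma nested_reflections_not_commute:
  assumes v: "v \<in> lists S" "s \<in> S" and v': "v' \<in> lists S" "s' \<in> S"
    and beyond: "\<And>y t. y \<in> lists S \<Longrightarrow> t \<in> S \<Longrightarrow>
      cls S E (y @ [t] @ rev y) = cls S E (v' @ [s'] @ rev v') \<Longrightarrow> cls S E (v @ [s] @ rev v) \<in> inversions y"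
  shows "\<not> (v @ [s] @ rev v) @ (v' @ [s'] @ rev v') \<approx> (v' @ [s'] @ rev v') @ (v @ [s] @ rev v)"
proof
  let ?\<rho> = "v @ [s] @ rev v" and ?\<rho>' = "v' @ [s'] @ rev v'"
  let ?z = "?\<rho> @ v'"
  assume c: "?\<rho> @ ?\<rho>' \<approx> ?\<rho>' @ ?\<rho>"
  have \<rho>l: "?\<rho> \<in> lists S" using v lists_rev by simp
  have \<rho>\<rho>: "?\<rho> @ ?\<rho> \<approx> []" using append_rev_eqv_Nil[OF \<rho>l] by simp
  have zl: "?z \<in> lists S" using \<rho>l v' by simp
  have "?z @ [s'] @ rev ?z = (?\<rho> @ ?\<rho>') @ ?\<rho>" by simp
  also have "\<dots> \<approx> ?\<rho>' @ (?\<rho> @ ?\<rho>)" using eqv_append[OF c eqv_refl] by simp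
  also have "\<dots> \<approx> ?\<rho>' @ []" using eqv_append[OF eqv_refl \<rho>\<rho>] .
  finally have "cls S E ?\<rho> \<in> inversions ?z"
    using beyond[OF zl v'(2)] by (simp add: cls_eq_iff)
  moreover have "cls S E ?\<rho> \<in> inversions ?\<rho>" using reflection_in_own_inversions[OF v] .
  moreover have "cls S E ?\<rho> \<in> odd_crossings ?\<rho> v'"
  proof -
    have "?\<rho> @ ?\<rho> @ rev ?\<rho> \<approx> ?\<rho>" using eqv_append[OF \<rho>\<rho> eqv_refl[of ?\<rho>]] by simp
    then have "cls S E (?\<rho> @ ?\<rho> @ rev ?\<rho>) = cls S E ?\<rho>" by (simp add: cls_eq_iff)
    moreover have "cls S E ?\<rho> \<in> inversions v'" using beyond[OF v'] by simp
    ultimately show ?thesis using odd_crossings_conj[OF \<rho>l, of ?\<rho> "[]" v'] by simp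
  qed
  ultimately show False using inversions_append[of ?\<rho> v'] by simp
qed

lemma nested_not_intersect:
  assumes v: "v \<in> lists S" "s \<in> S" and v': "v' \<in> lists S" "s' \<in> S"
    and less: "wall_less S E (cls S E []) (wall S E (cls S E (v @ [s] @ rev v)))
      (wall S E (cls S E (v' @ [s'] @ rev v')))"
  shows "\<not> walls_intersect S E (wall S E (cls S E (v @ [s] @ rev v)))
      (wall S E (cls S E (v' @ [s'] @ rev v')))"
proof -
  let ?\<rho> = "v @ [s] @ rev v" and ?\<rho>' = "v' @ [s'] @ rev v'"
  have r: "cls S E ?\<rho> \<in> reflections S E" "cls S E ?\<rho>' \<in> reflections S E"
    using v v' unfolding reflections_def by blast+
  have \<rho>l: "?\<rho> \<in> lists S" "?\<rho>' \<in> lists S" using v v' lists_rev by simp_all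
  have beyond: "cls S E ?\<rho> \<in> inversions y \<and> cls S E ?\<rho> \<in> inversions (y @ [t])"
    if "y \<in> lists S" "t \<in> S" "cls S E (y @ [t] @ rev y) = cls S E ?\<rho>'" for y t
    using that less wall_less_iff_inversions[OF lists.Nil] by simp
  have "cls S E ?\<rho> \<noteq> cls S E ?\<rho>'"
    using beyond[OF v' refl] inversions_append[of v' "[s']"] by auto
  moreover have "\<not> commute_el S E (cls S E ?\<rho>) (cls S E ?\<rho>')"
    using nested_reflections_not_commute[OF v v'] beyond commute_el_iff[OF \<rho>l] by blast
  ultimately show ?thesis using walls_intersect_iff[OF r] by simp
qed

lemma adjacent_commuting_edge_refls_commute:
  assumes v: "v \<in> lists S" and j: "Suc j < length v" and e: "E (v ! j) (v ! Suc j)"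
  shows "commute_el S E (edge_refl [] v j) (edge_refl [] v (Suc j))"
proof -
  let ?g = "take j v" and ?a = "v ! j" and ?b = "v ! Suc j"
  have gl: "?g \<in> lists S" using v lists_take by auto
  have r0: "edge_refl [] v j = cls S E (?g @ [?a] @ rev ?g)"
    unfolding edge_refl_def by simp
  have "edge_refl [] v (Suc j) = cls S E (?g @ [?a, ?b, ?a] @ rev ?g)"
    using j by (simp add: edge_refl_def take_Suc_conv_app_nth)
  also have "\<dots> = cls S E (?g @ [?b] @ rev ?g)"
    using eqv_context[OF eqv_commuting_conj[OF e]] by (simp add: cls_eq_iff)
  finally have r1: "edge_refl [] v (Suc j) = cls S E (?g @ [?b] @ rev ?g)" .
  have "commute_el S E (cls S E [?a]) (cls S E [?b])"
    using commute_el_iff E_dom E_ran e eqv_swap[OF e] by simp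
  then show ?thesis
    unfolding r0 r1 using commute_el_conj_iff[OF gl, of "[?a]" "[?b]"] E_dom E_ran e by simp
qed

end

section \<open>Nested walls of a geodesic\<close>

locale geodesic_word = right_angled_coxeter S E for S :: "'a set" and E +
  fixes w :: "'a list"
  assumes w_geodesic: "geodesic w"
begin

definition wrefl :: "nat \<Rightarrow> 'a list set" where "wrefl k = edge_refl [] w k"

definition nested :: "nat \<Rightarrow> nat \<Rightarrow> bool" where
  "nested k l \<longleftrightarrow> wall_less S E (cls S E []) (wall S E (wrefl k)) (wall S E (wrefl l))"

lemma w_lists: "w \<in> lists S" using w_geodesic geodesic_lists by auto

lemma wrefl_reflection: "k < length w \<Longrightarrow> wrefl k \<in> reflections S E"
  unfolding wrefl_def using edge_refl_reflection[of "[]" w k] w_lists by simp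

lemma wrefl_inj: "k < length w \<Longrightarrow> l < length w \<Longrightarrow> wrefl k = wrefl l \<Longrightarrow> k = l"
  unfolding wrefl_def using geodesic_edge_refl_distinct[OF w_geodesic, of "[]"] by (metis linorder_neqE_nat lists.Nil)

lemma inversions_take_w: "p \<le> length w \<Longrightarrow> inversions (take p w) = wrefl ` {..<p}"
  unfolding wrefl_def using geodesic_inversions_take[OF w_geodesic] by simp

lemma inversions_w: "inversions w = wrefl ` {..<length w}"
  using inversions_take_w[of "length w"] by simp

lemma nested_iff:
  "nested k l \<longleftrightarrow> (\<forall>y s. y \<in> lists S \<longrightarrow> s \<in> S \<longrightarrow> cls S E (y @ [s] @ rev y) = wrefl l \<longrightarrow>
      wrefl k \<in> inversions y \<and> wrefl k \<in> inversions (y @ [s]))"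
  unfolding nested_def using wall_less_iff_inversions[OF lists.Nil, of "wrefl k" "wrefl l"] by simp

lemma wrefl_eq: "cls S E (take l w @ [w ! l] @ rev (take l w)) = wrefl l"
  by (simp add: wrefl_def edge_refl_def)

lemma take_w_lists: "take l w \<in> lists S" using w_lists lists_take by auto
lemma nth_w_in_S: "l < length w \<Longrightarrow> w ! l \<in> S" using w_lists lists_nth by auto

lemma nested_less:
  assumes k: "k < length w" and l: "l < length w" and p: "nested k l"
  shows "k < l"
proof -
  have "wrefl k \<in> inversions (take l w)"
    using p nested_iff take_w_lists nth_w_in_S[OF l] wrefl_eq by blast
  then obtain i where i: "i < l" "wrefl k = wrefl i" using inversions_take_w[of l] l by auto
  have "k = i" using wrefl_inj[OF k _ i(2)] i(1) l by simp
  then show ?thesis using i(1) by simp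
qed

lemma nested_irrefl: "k < length w \<Longrightarrow> \<not> nested k k"
  using nested_less by blast

lemma nested_inversions:
  assumes p: "nested k l" and x: "x \<in> lists S" and tl: "wrefl l \<in> inversions x"
  shows "wrefl k \<in> inversions x"
proof -
  obtain g where g: "geodesic g" "g \<approx> x" using geodesic_exists[OF x] by blast
  have Ng: "inversions g = inversions x" using odd_crossings_eqv[OF g(2)] by simp
  have gl: "g \<in> lists S" using g geodesic_lists by auto
  have "wrefl l \<in> edge_refl [] g ` {..<length g}" using tl Ng geodesic_inversions[OF g(1)] by simp
  then obtain j where j: "j < length g" "wrefl l = edge_refl [] g j" by auto
  have "cls S E (take j g @ [g ! j] @ rev (take j g)) = wrefl l" using j(2) by (simp add: edge_refl_def)
  hence "wrefl k \<in> inversions (take j g)"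
    using p nested_iff gl lists_take lists_nth j(1) by blast
  also have "inversions (take j g) \<subseteq> inversions g" using geodesic_inversions_take[OF g(1)] geodesic_inversions[OF g(1)] j(1) by auto
  finally show ?thesis using Ng by simp
qed

lemma nested_trans:
  assumes p1: "nested k l" and p2: "nested l q"
  shows "nested k q"
  unfolding nested_iff
proof (intro allI impI)
  fix y s assume y: "y \<in> lists S" and s: "s \<in> S" and r: "cls S E (y @ [s] @ rev y) = wrefl q"
  have "wrefl l \<in> inversions y \<and> wrefl l \<in> inversions (y @ [s])" using p2 nested_iff y s r by blast
  moreover have "y @ [s] \<in> lists S" using y s by simp
  ultimately show "wrefl k \<in> inversions y \<and> wrefl k \<in> inversions (y @ [s])" using nested_inversions[OF p1] y by blast
qed

section \<open>Reordering the walls of a geodesic\<close>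

definition permute :: "nat list \<Rightarrow> 'a list" where "permute \<tau> = map (\<lambda>i. w ! i) \<tau>"

text \<open>\<open>\<tau>\<close> lists the walls of \<open>w\<close> in the order in which the geodesic \<open>permute \<tau>\<close>, which has the
  same endpoints as \<open>w\<close>, crosses them.\<close>

definition realizing :: "nat list \<Rightarrow> bool" where
  "realizing \<tau> \<longleftrightarrow> distinct \<tau> \<and> set \<tau> = {..<length w} \<and> permute \<tau> \<approx> w \<and>
     (\<forall>j<length w. edge_refl [] (permute \<tau>) j = wrefl (\<tau> ! j))"

lemma realizing_length: "realizing \<tau> \<Longrightarrow> length \<tau> = length w"
  unfolding realizing_def using distinct_card by fastforce

lemma realizing_id: "realizing [0..<length w]"
proof -
  have "permute [0..<length w] = w" unfolding permute_def by (simp add: map_nth)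
  then show ?thesis unfolding realizing_def wrefl_def by auto
qed

lemma permute_lists: "set \<tau> \<subseteq> {..<length w} \<Longrightarrow> permute \<tau> \<in> lists S"
  unfolding permute_def by (auto simp: in_lists_conv_set subset_iff intro!: nth_w_in_S)

lemma realizing_geodesic: "realizing \<tau> \<Longrightarrow> geodesic (permute \<tau>)"
proof -
  assume r: "realizing \<tau>"
  have len: "length (permute \<tau>) = length w" using realizing_length[OF r] by (simp add: permute_def)
  have eq: "permute \<tau> \<approx> w" using r by (simp add: realizing_def)
  show "geodesic (permute \<tau>)" unfolding geodesic_def
  proof (intro conjI ballI impI)
    show "permute \<tau> \<in> lists S" using r permute_lists by (simp add: realizing_def)
  next
    fix v' assume "v' \<in> lists S" "v' \<approx> permute \<tau>"
    hence "v' \<approx> w" using eq eqv_trans by blast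
    hence "length w \<le> length v'" using w_geodesic \<open>v' \<in> lists S\<close> by (simp add: geodesic_def)
    then show "length (permute \<tau>) \<le> length v'" using len by simp
  qed
qed

lemma realizing_adjacent_nested:
  assumes r: "realizing \<tau>" and j: "Suc j < length w" and nE: "\<not> E (w ! (\<tau> ! j)) (w ! (\<tau> ! Suc j))"
  shows "nested (\<tau> ! j) (\<tau> ! Suc j)"
proof -
  have len: "length \<tau> = length w" using realizing_length[OF r] .
  have g: "geodesic (permute \<tau>)" using realizing_geodesic[OF r] .
  have lw: "length (permute \<tau>) = length w" using len by (simp add: permute_def)
  have tj: "\<tau> ! j < length w" using r j len by (metis Suc_lessD lessThan_iff nth_mem realizing_def)
  have R0: "edge_refl [] (permute \<tau>) j = wrefl (\<tau> ! j)" using r j by (simp add: realizing_def)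
  have R1: "edge_refl [] (permute \<tau>) (Suc j) = wrefl (\<tau> ! Suc j)" using r j by (simp add: realizing_def)
  have nE': "\<not> E (permute \<tau> ! j) (permute \<tau> ! Suc j)" using nE j len by (simp add: permute_def)
  show ?thesis unfolding nested_iff
  proof (intro allI impI)
    fix y s assume y: "y \<in> lists S" and s: "s \<in> S" and c: "cls S E (y @ [s] @ rev y) = wrefl (\<tau> ! Suc j)"
    show "wrefl (\<tau> ! j) \<in> inversions y \<and> wrefl (\<tau> ! j) \<in> inversions (y @ [s])"
      using adjacent_noncommuting_nested[OF g _ nE' y s] j lw c R0 R1 by simp
  qed
qed

lemma realizing_swap:
  assumes r: "realizing (A @ [x, y] @ B)" and e: "E (w ! x) (w ! y)"
  shows "realizing (A @ [y, x] @ B)"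
proof -
  let ?\<tau> = "A @ [x, y] @ B" and ?\<tau>' = "A @ [y, x] @ B"
  have p: "permute ?\<tau> = permute A @ [w ! x, w ! y] @ permute B"
    "permute ?\<tau>' = permute A @ [w ! y, w ! x] @ permute B" by (simp_all add: permute_def)
  have lA: "length (permute A) = length A" by (simp add: permute_def)
  have "permute ?\<tau>' \<approx> permute ?\<tau>"
    unfolding p using eqv_swap[OF E_sym[OF e]] by (rule eqv_context)
  then have "permute ?\<tau>' \<approx> w" using r eqv_trans by (simp add: realizing_def)
  moreover have "edge_refl [] (permute ?\<tau>') j = wrefl (?\<tau>' ! j)" if j: "j < length w" for j
  proof -
    have R: "edge_refl [] (permute ?\<tau>) i = wrefl (?\<tau> ! i)" if "i < length w" for i
      using r that by (simp add: realizing_def)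
    have len: "length ?\<tau> = length w" using realizing_length[OF r] .
    consider "j = length A" | "j = Suc (length A)" | "j \<noteq> length A" "j \<noteq> Suc (length A)"
      by blast
    then show ?thesis
      using edge_refl_swap(1,2)[OF e, where p = "permute A" and q = "permute B"]
        edge_refl_swap(3)[OF e, where p = "permute A" and q = "permute B" and j = j] R[of j] R[of "length A"] R[of "Suc (length A)"]
        j len
      by cases (simp_all add: permute_def nth_append)
  qed
  ultimately show ?thesis using r by (auto simp: realizing_def)
qed

lemma realizing_nth_less: "realizing \<tau> \<Longrightarrow> j < length w \<Longrightarrow> \<tau> ! j < length w"
  using realizing_length[of \<tau>] nth_mem[of j \<tau>] by (auto simp: realizing_def)

lemma realizing_swap_adjacent:
  assumes r: "realizing \<tau>" and q: "Suc q < length w" and np: "\<not> nested (\<tau> ! q) (\<tau> ! Suc q)"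
  shows "realizing (take q \<tau> @ [\<tau> ! Suc q, \<tau> ! q] @ drop (Suc (Suc q)) \<tau>)"
proof -
  have len: "length \<tau> = length w" using realizing_length[OF r] .
  have "\<tau> = take q \<tau> @ [\<tau> ! q, \<tau> ! Suc q] @ drop (Suc (Suc q)) \<tau>"
    using q len id_take_nth_drop[of q \<tau>] Cons_nth_drop_Suc[of "Suc q" \<tau>] by simp
  moreover have "E (w ! (\<tau> ! q)) (w ! (\<tau> ! Suc q))"
    using realizing_adjacent_nested[OF r q] np by blast
  ultimately show ?thesis using realizing_swap r by metis
qed

lemma realizing_move:
  "realizing \<tau> \<Longrightarrow> k + d < length w \<Longrightarrow>
   (\<forall>q. k \<le> q \<longrightarrow> q < k + d \<longrightarrow> \<not> nested (\<tau> ! q) (\<tau> ! (k + d))) \<Longrightarrow>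
   \<exists>\<tau>'. realizing \<tau>' \<and> take k \<tau>' = take k \<tau> \<and> \<tau>' ! k = \<tau> ! (k + d)"
proof (induction d arbitrary: \<tau>)
  case (Suc d)
  let ?q = "k + d"
  let ?\<tau>' = "take ?q \<tau> @ [\<tau> ! Suc ?q, \<tau> ! ?q] @ drop (Suc (Suc ?q)) \<tau>"
  have len: "length \<tau> = length w" using realizing_length[OF Suc.prems(1)] .
  have r': "realizing ?\<tau>'"
    using realizing_swap_adjacent[OF Suc.prems(1)] Suc.prems(2,3) by simp
  have nth': "?\<tau>' ! ?q = \<tau> ! Suc ?q" "\<And>q. q < ?q \<Longrightarrow> ?\<tau>' ! q = \<tau> ! q"
    using Suc.prems(2) len by (simp_all add: nth_append)
  have "take k ?\<tau>' = take k \<tau>" using Suc.prems(2) len by (simp add: take_append min_def)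
  moreover obtain \<tau>'' where "realizing \<tau>''" "take k \<tau>'' = take k ?\<tau>'" "\<tau>'' ! k = ?\<tau>' ! ?q"
    using Suc.IH[OF r'] Suc.prems(2,3) nth' by force
  ultimately show ?case using nth' by auto
qed auto

lemma realizing_extend:
  assumes \<sigma>: "distinct \<sigma>" "set \<sigma> = {..<length w}" "sorted_wrt (\<lambda>u v. \<not> nested v u) \<sigma>"
    and r: "realizing \<tau>" and tk: "take k \<tau> = take k \<sigma>" and k: "k < length w"
  shows "\<exists>\<tau>'. realizing \<tau>' \<and> take (Suc k) \<tau>' = take (Suc k) \<sigma>"
proof -
  have ls: "length \<sigma> = length w" using \<sigma> distinct_card by fastforce
  have lt: "length \<tau> = length w" and dt: "distinct \<tau>" and stt: "set \<tau> = {..<length w}"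
    using r realizing_length by (auto simp: realizing_def)
  have disj: "set (take k \<sigma>) \<inter> set (drop k \<tau>) = {}"
    using tk set_take_disj_set_drop_if_distinct[OF dt, of k k] by simp
  have "\<sigma> ! k \<in> set \<tau>" using nth_mem[of k \<sigma>] k ls stt \<sigma>(2) by simp
  then obtain p where p: "p < length w" "\<tau> ! p = \<sigma> ! k" using lt by (auto simp: in_set_conv_nth)
  have kp: "k \<le> p"
  proof (rule ccontr)
    assume "\<not> k \<le> p"
    then have "\<sigma> ! p = \<sigma> ! k" using tk p(2) by (metis nth_take not_le)
    then show False using \<open>\<not> k \<le> p\<close> \<sigma>(1) k ls by (simp add: nth_eq_iff_index_eq)
  qed
  have "\<not> nested (\<tau> ! q) (\<tau> ! p)" if q: "k \<le> q" "q < p" for q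
  proof -
    have "\<tau> ! q \<in> set \<sigma>" using nth_mem[of q \<tau>] q p lt stt \<sigma>(2) by simp
    then obtain j where j: "j < length \<sigma>" "\<sigma> ! j = \<tau> ! q" by (auto simp: in_set_conv_nth)
    have "\<tau> ! q \<in> set (drop k \<tau>)" using nth_mem[of "q - k" "drop k \<tau>"] q p lt by simp
    then have "\<not> j < k" using disj nth_mem[of j "take k \<sigma>"] j by auto
    moreover have "\<tau> ! q \<noteq> \<tau> ! p" using dt q p(1) lt by (simp add: nth_eq_iff_index_eq)
    then have "j \<noteq> k" using j p by auto
    ultimately have "k < j" by simp
    then show ?thesis using \<sigma>(3) j p unfolding sorted_wrt_iff_nth_less by metis
  qed
  then have "\<forall>q. k \<le> q \<longrightarrow> q < k + (p - k) \<longrightarrow> \<not> nested (\<tau> ! q) (\<tau> ! (k + (p - k)))"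
    using kp by simp
  then obtain \<tau>' where \<tau>': "realizing \<tau>'" "take k \<tau>' = take k \<tau>" "\<tau>' ! k = \<tau> ! p"
    using realizing_move[OF r, of k "p - k"] kp p(1) by auto
  have "take (Suc k) \<tau>' = take k \<sigma> @ [\<sigma> ! k]"
    using \<tau>' tk p k realizing_length[OF \<tau>'(1)] by (simp add: take_Suc_conv_app_nth)
  then show ?thesis using \<tau>'(1) k ls by (auto simp: take_Suc_conv_app_nth)
qed

text \<open>Insertion sort: the elements of \<open>\<sigma>\<close> are moved into place one at a time.\<close>

lemma realizing_linear_extension:
  assumes \<sigma>: "distinct \<sigma>" "set \<sigma> = {..<length w}" "sorted_wrt (\<lambda>u v. \<not> nested v u) \<sigma>"
  shows "realizing \<sigma>"
proof -
  have "\<exists>\<tau>. realizing \<tau> \<and> take k \<tau> = take k \<sigma>" if "k \<le> length w" for k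
    using that
  proof (induction k)
    case 0
    then show ?case using realizing_id by auto
  next
    case (Suc k)
    then show ?case using realizing_extend[OF \<sigma>] by (meson Suc_leD Suc_le_lessD)
  qed
  then obtain \<tau> where "realizing \<tau>" "take (length w) \<tau> = take (length w) \<sigma>" by blast
  moreover have "length \<sigma> = length w" using \<sigma> distinct_card by fastforce
  ultimately show ?thesis using realizing_length by simp
qed

lemma upt_sorted_nested: "sorted_wrt (\<lambda>u v. \<not> nested v u) [0..<length w]"
  unfolding sorted_wrt_iff_nth_less
proof (intro allI impI notI)
  fix i j assume h: "i < j" "j < length [0..<length w]" "nested ([0..<length w] ! j) ([0..<length w] ! i)"
  hence "nested j i" by simp
  then have "j < i" using nested_less h by simp
  then show False using h by simp
qed

lemma realizing_adjacent_exists: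
  assumes x: "x < length w" and y: "y < length w" and xy: "x \<noteq> y"
    and n1: "\<not> nested x y" and n2: "\<not> nested y x"
  obtains \<tau> j where "realizing \<tau>" "Suc j < length w" "\<tau> ! j = x" "\<tau> ! Suc j = y"
proof -
  let ?P = "\<lambda>z. nested z x \<or> nested z y"
  define L1 where "L1 = filter ?P [0..<length w]"
  define L2 where "L2 = filter (\<lambda>z. \<not> ?P z \<and> z \<noteq> x \<and> z \<noteq> y) [0..<length w]"
  let ?\<sigma> = "L1 @ [x, y] @ L2" and ?R = "\<lambda>u v. \<not> nested v u"
  have "x \<notin> set L1" "y \<notin> set L1" using nested_irrefl x y n1 n2 by (auto simp: L1_def)
  then have d: "distinct ?\<sigma>" using xy by (auto simp: L1_def L2_def)
  have st: "set ?\<sigma> = {..<length w}" using x y by (auto simp: L1_def L2_def)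
  have L1_below: "\<not> nested v u" if u: "u \<in> set L1" and v: "v \<in> set ([x, y] @ L2)" for u v
  proof
    assume vu: "nested v u"
    then have "nested v x \<or> nested v y"
      using u nested_trans[OF vu] by (auto simp: L1_def)
    then show False using v nested_irrefl x y n1 n2 by (auto simp: L2_def)
  qed
  have "sorted_wrt ?R L1" "sorted_wrt ?R L2"
    unfolding L1_def L2_def by (rule sorted_wrt_filter[OF upt_sorted_nested])+
  then have "sorted_wrt ?R ?\<sigma>"
    using L1_below n2 by (auto simp: sorted_wrt_append L2_def)
  then have r: "realizing ?\<sigma>" by (rule realizing_linear_extension[OF d st])
  moreover have "Suc (length L1) < length w" using realizing_length[OF r] by simp
  ultimately show thesis using that[of ?\<sigma> "length L1"] by (simp add: nth_append)
qed

text \<open>Unnested walls of a geodesic are crossed consecutively by some geodesic with the same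
  endpoints, and there by commuting letters.\<close>

lemma unnested_commute:
  assumes x: "x < length w" and y: "y < length w" and xy: "x \<noteq> y"
    and n1: "\<not> nested x y" and n2: "\<not> nested y x"
  shows "commute_el S E (wrefl x) (wrefl y)"
proof -
  obtain \<tau> j where r: "realizing \<tau>" and j: "Suc j < length w" and \<tau>: "\<tau> ! j = x" "\<tau> ! Suc j = y"
    using realizing_adjacent_exists[OF assms] .
  have len: "length (permute \<tau>) = length w" using realizing_length[OF r] by (simp add: permute_def)
  have "E (permute \<tau> ! j) (permute \<tau> ! Suc j)"
    using realizing_adjacent_nested[OF r j] n1 \<tau> len j by (auto simp: permute_def)
  moreover have "permute \<tau> \<in> lists S" using permute_lists r by (simp add: realizing_def)
  ultimately have "commute_el S E (edge_refl [] (permute \<tau>) j) (edge_refl [] (permute \<tau>) (Suc j))"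
    using adjacent_commuting_edge_refls_commute j len by simp
  moreover have "edge_refl [] (permute \<tau>) j = wrefl x" "edge_refl [] (permute \<tau>) (Suc j) = wrefl y"
    using r j \<tau> unfolding realizing_def by auto
  ultimately show ?thesis by simp
qed

end

section \<open>Orders with bounded products\<close>

text \<open>At most \<open>K\<close> elements incomparable with both \<open>spine ! i\<close> and \<open>spine ! (i + K)\<close>, as many
  with both \<open>spine ! (i - K)\<close> and \<open>spine ! i\<close>, and \<open>(2K + 1)\<^sup>2\<close> others: see
  \<open>card_incomparables_le\<close>.\<close>

definition decomp_bound :: "nat \<Rightarrow> nat" where
  "decomp_bound K = 2 * K + (2 * K + 1) * (2 * K + 1)"

lemma decomp_bound_pos: "0 < decomp_bound K"
  by (simp add: decomp_bound_def)

locale bounded_products_order =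
  fixes m :: nat and prec :: "nat \<Rightarrow> nat \<Rightarrow> bool" and K :: nat
  assumes prec_less: "k < m \<Longrightarrow> l < m \<Longrightarrow> prec k l \<Longrightarrow> k < l"
    and prec_trans: "k < m \<Longrightarrow> l < m \<Longrightarrow> q < m \<Longrightarrow> prec k l \<Longrightarrow> prec l q \<Longrightarrow> prec k q"
    and bounded_products: "A \<subseteq> {..<m} \<Longrightarrow> B \<subseteq> {..<m} \<Longrightarrow> A \<inter> B = {} \<Longrightarrow>
       (\<forall>a\<in>A. \<forall>b\<in>B. \<not> prec a b \<and> \<not> prec b a) \<Longrightarrow> min (card A) (card B) \<le> K"
begin

definition incomparable :: "nat \<Rightarrow> nat \<Rightarrow> bool" where
  "incomparable a b \<longleftrightarrow> a \<noteq> b \<and> \<not> prec a b \<and> \<not> prec b a"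

definition chain :: "nat set \<Rightarrow> bool" where
  "chain Z \<longleftrightarrow> Z \<subseteq> {..<m} \<and> (\<forall>a\<in>Z. \<forall>b\<in>Z. a \<noteq> b \<longrightarrow> prec a b \<or> prec b a)"

definition antichain :: "nat set \<Rightarrow> bool" where
  "antichain X \<longleftrightarrow> X \<subseteq> {..<m} \<and> (\<forall>a\<in>X. \<forall>b\<in>X. \<not> prec a b)"

definition incomparables :: "nat \<Rightarrow> nat set" where
  "incomparables c = {v \<in> {..<m}. incomparable v c}"

lemma antichain_card_le: "antichain X \<Longrightarrow> card X \<le> 2 * K + 1"
proof (rule ccontr)
  assume X: "antichain X" and big: "\<not> card X \<le> 2 * K + 1"
  then obtain A where A: "A \<subseteq> X" "card A = Suc K"
    using obtain_subset_with_card_n[of "Suc K" X] by force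
  have fin: "finite X" using X finite_subset[of X "{..<m}"] by (simp add: antichain_def)
  have "card (X - A) = card X - Suc K" using A fin by (simp add: card_Diff_subset finite_subset)
  then have "min (card A) (card (X - A)) > K" using A big by simp
  moreover have "min (card A) (card (X - A)) \<le> K"
    by (rule bounded_products) (use X A in \<open>auto simp: antichain_def\<close>)
  ultimately show False by (meson not_le)
qed

lemma chain_finite: "chain Z \<Longrightarrow> finite Z"
  using finite_subset[of Z "{..<m}"] by (simp add: chain_def)

lemma chain_Min_prec:
  assumes "chain Z" "z \<in> Z" "z \<noteq> Min Z"
  shows "prec (Min Z) z"
proof -
  have fin: "finite Z" and ne: "Z \<noteq> {}" using assms chain_finite by auto
  have "Min Z \<in> Z" "Min Z \<le> z" using assms(2) Min_in[OF fin ne] fin by auto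
  moreover have "z < m" "Min Z < m" using assms(1,2) \<open>Min Z \<in> Z\<close> by (auto simp: chain_def)
  ultimately show ?thesis
    using assms prec_less[of z "Min Z"] unfolding chain_def by fastforce
qed

lemma chain_insert_below:
  assumes "chain Z" "y < m" "\<forall>z\<in>Z. prec y z"
  shows "chain (insert y Z)"
  using assms by (auto simp: chain_def)

lemma minimal_below:
  assumes N: "N \<subseteq> {..<m}" and z: "z \<in> N" and y: "y \<in> N" "prec y z"
  obtains y0 where "y0 \<in> N" "prec y0 z" "\<forall>x\<in>N. \<not> prec x y0"
proof -
  let ?Y = "{y \<in> N. prec y z}"
  have fin: "finite ?Y" using N by (auto intro: finite_subset[of _ "{..<m}"])
  have ne: "?Y \<noteq> {}" using y by blast
  have y0: "Min ?Y \<in> ?Y" using Min_in[OF fin ne] .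
  have "\<not> prec x (Min ?Y)" if x: "x \<in> N" for x
  proof
    assume xy: "prec x (Min ?Y)"
    have lt: "x < m" "Min ?Y < m" "z < m" using N x y0 z by auto
    then have "x \<in> ?Y" using prec_trans[OF lt xy] x y0 by simp
    then have "Min ?Y \<le> x" using fin by simp
    then show False using prec_less[OF lt(1,2) xy] by simp
  qed
  then show thesis using that y0 by blast
qed

text \<open>Mirsky's theorem, with antichains bounded by \<open>antichain_card_le\<close>.\<close>

lemma card_le_height_mult_width:
  "N \<subseteq> {..<m} \<Longrightarrow> (\<And>Z. chain Z \<Longrightarrow> Z \<subseteq> N \<Longrightarrow> card Z \<le> h) \<Longrightarrow> card N \<le> h * (2 * K + 1)"
proof (induction h arbitrary: N)
  case 0
  have "N = {}"
  proof (rule ccontr)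
    assume "N \<noteq> {}"
    then obtain x where "x \<in> N" by blast
    then have "card {x} \<le> 0" using 0 by (intro "0.prems"(2)) (auto simp: chain_def)
    then show False by simp
  qed
  then show ?case by simp
next
  case (Suc h)
  let ?M = "{x \<in> N. \<forall>y\<in>N. \<not> prec y x}"
  have "card ?M \<le> 2 * K + 1"
    by (rule antichain_card_le) (use Suc.prems(1) in \<open>auto simp: antichain_def\<close>)
  moreover have "card (N - ?M) \<le> h * (2 * K + 1)"
  proof (rule Suc.IH)
    fix Z assume Z: "chain Z" "Z \<subseteq> N - ?M"
    show "card Z \<le> h"
    proof (cases "Z = {}")
      case False
      have fin: "finite Z" using chain_finite[OF Z(1)] .
      have "Min Z \<in> N - ?M" using Z(2) Min_in[OF fin False] by blast
      then obtain y where "y \<in> N" "prec y (Min Z)" by blast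
      then obtain y0 where y0: "y0 \<in> ?M" "prec y0 (Min Z)"
        using minimal_below[OF Suc.prems(1), of "Min Z"] \<open>Min Z \<in> N - ?M\<close> by blast
      have lt: "y0 < m" "Min Z < m" using y0 Suc.prems(1) \<open>Min Z \<in> N - ?M\<close> by auto
      have "\<forall>z\<in>Z. prec y0 z"
      proof
        fix z assume z: "z \<in> Z"
        have "z < m" using z Z(1) by (auto simp: chain_def)
        then show "prec y0 z"
          using y0(2) prec_trans[OF lt _ _ chain_Min_prec[OF Z(1) z]] by (cases "z = Min Z") auto
      qed
      then have "card (insert y0 Z) \<le> Suc h"
        using Suc.prems(2) chain_insert_below[OF Z(1) lt(1)] Z(2) y0(1) by auto
      moreover have "y0 \<notin> Z" using y0(1) Z(2) by blast
      ultimately show ?thesis using fin by simp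
    qed simp
  qed (use Suc.prems(1) in auto)
  moreover have "card N \<le> card ?M + card (N - ?M)"
    using card_Un_le[of ?M "N - ?M"] by (simp add: Un_absorb1)
  ultimately have "card N \<le> (2 * K + 1) + h * (2 * K + 1)" by linarith
  then show ?case by (simp only: mult_Suc)
qed

lemma exists_max_card_chain: "\<exists>C. chain C \<and> (\<forall>C'. chain C' \<longrightarrow> card C' \<le> card C)"
proof -
  let ?cs = "card ` {Z. chain Z}"
  have fin: "finite ?cs" using finite_subset[of "{Z. chain Z}" "Pow {..<m}"] by (auto simp: chain_def)
  have "{} \<in> {Z. chain Z}" by (simp add: chain_def)
  then have "Max ?cs \<in> ?cs" using Max_in[OF fin] by blast
  then show ?thesis using Max_ge[OF fin] by fastforce
qed

end

locale maximum_chain = bounded_products_order +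
  fixes C :: "nat set"
  assumes chain_C: "chain C" and card_chain_le: "chain Z \<Longrightarrow> card Z \<le> card C"
begin

definition spine :: "nat list" where
  "spine = filter (\<lambda>x. x \<in> C) [0..<m]"

lemma C_subset_lessThan: "C \<subseteq> {..<m}"
  using chain_C by (simp add: chain_def)

lemma set_spine: "set spine = C"
  using C_subset_lessThan by (auto simp: spine_def)

lemma distinct_spine: "distinct spine"
  by (simp add: spine_def)

lemma nth_spine_in: "i < length spine \<Longrightarrow> spine ! i \<in> C"
  using nth_mem set_spine by blast

lemma nth_spine_lt: "i < length spine \<Longrightarrow> spine ! i < m"
  using nth_spine_in C_subset_lessThan by blast

lemma spine_less: "i < j \<Longrightarrow> j < length spine \<Longrightarrow> spine ! i < spine ! j"
proof -
  have "sorted_wrt (<) spine"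
    unfolding spine_def by (rule sorted_wrt_filter) (simp add: sorted_wrt_iff_nth_less)
  then show "i < j \<Longrightarrow> j < length spine \<Longrightarrow> spine ! i < spine ! j"
    by (simp add: sorted_wrt_iff_nth_less)
qed

lemma spine_prec:
  assumes "i < j" "j < length spine"
  shows "prec (spine ! i) (spine ! j)"
proof -
  have lt: "spine ! i < spine ! j" using spine_less[OF assms] .
  have "prec (spine ! i) (spine ! j) \<or> prec (spine ! j) (spine ! i)"
    using chain_C nth_spine_in assms lt unfolding chain_def by (metis less_imp_neq order.strict_trans)
  then show ?thesis
    using prec_less[of "spine ! j" "spine ! i"] lt nth_spine_lt assms by fastforce
qed

lemma spine_prec_left:
  assumes "i \<le> j" "j < length spine" "z < m" "prec (spine ! j) z"
  shows "prec (spine ! i) z"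
proof (cases "i = j")
  case False
  then have "prec (spine ! i) (spine ! j)" using assms spine_prec by simp
  moreover have "spine ! i < m" "spine ! j < m" using assms nth_spine_lt by auto
  ultimately show ?thesis using prec_trans[of "spine ! i" "spine ! j" z] assms by blast
qed (use assms in simp)

lemma spine_prec_right:
  assumes "i \<le> j" "j < length spine" "z < m" "prec z (spine ! i)"
  shows "prec z (spine ! j)"
proof (cases "i = j")
  case False
  then have "prec (spine ! i) (spine ! j)" using assms spine_prec by simp
  moreover have "spine ! i < m" "spine ! j < m" using assms nth_spine_lt by auto
  ultimately show ?thesis using prec_trans[of z "spine ! i" "spine ! j"] assms by blast
qed (use assms in simp)

lemma incomparable_spine_notin:
  assumes i: "i < length spine" and v: "incomparable v (spine ! i)"
  shows "v \<notin> C"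
proof
  assume "v \<in> C"
  then obtain j where j: "j < length spine" "spine ! j = v"
    using set_spine by (metis in_set_conv_nth)
  consider "i < j" | "j < i" using v j by (metis incomparable_def linorder_neqE_nat)
  then show False
  proof cases
    case 1
    then show False using spine_prec[OF 1 j(1)] v j by (simp add: incomparable_def)
  next
    case 2
    then show False using spine_prec[OF 2 i] v j by (simp add: incomparable_def)
  qed
qed

lemma exists_incomparable_spine:
  assumes v: "v < m" "v \<notin> C"
  shows "\<exists>i<length spine. incomparable v (spine ! i)"
proof (rule ccontr)
  assume none: "\<not> ?thesis"
  have "prec v c \<or> prec c v" if c: "c \<in> C" for c
  proof -
    obtain j where "j < length spine" "spine ! j = c"
      using c set_spine by (metis in_set_conv_nth)
    then show ?thesis using none v(2) c by (auto simp: incomparable_def)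
  qed
  then have "chain (insert v C)"
    using chain_C v(1) unfolding chain_def by blast
  then have "card (insert v C) \<le> card C" by (rule card_chain_le)
  then show False using v(2) chain_finite[OF chain_C] by simp
qed

lemma incomparable_spine_between:
  assumes "i \<le> k" "k \<le> j" "j < length spine" "v < m"
    and "incomparable v (spine ! i)" "incomparable v (spine ! j)"
  shows "incomparable v (spine ! k)"
proof -
  have "v \<notin> C" using incomparable_spine_notin assms by simp
  then have "v \<noteq> spine ! k" using nth_spine_in assms by auto
  moreover have "\<not> prec (spine ! k) v"
    using spine_prec_left[of i k v] assms by (auto simp: incomparable_def)
  moreover have "\<not> prec v (spine ! k)"
    using spine_prec_right[of k j v] assms by (auto simp: incomparable_def)
  ultimately show ?thesis by (simp add: incomparable_def)
qed

text \<open>The \<open>K + 1\<close> spine elements from \<open>spine ! i\<close> to \<open>spine ! (i + K)\<close> form one side of a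
  product region, the elements incomparable with both ends the other.\<close>

lemma card_incomparable_pair_le:
  assumes iK: "i + K < length spine"
  shows "card {v \<in> incomparables (spine ! i). incomparable v (spine ! (i + K))} \<le> K"
    (is "card ?B \<le> K")
proof -
  let ?A = "(!) spine ` {i..i + K}"
  have "inj_on ((!) spine) {i..i + K}"
    using distinct_spine iK by (auto intro!: inj_onI simp: nth_eq_iff_index_eq)
  then have "card ?A = Suc K" by (simp add: card_image)
  moreover have "min (card ?A) (card ?B) \<le> K"
  proof (rule bounded_products)
    show "?A \<subseteq> {..<m}" using nth_spine_lt iK by auto
    show "?B \<subseteq> {..<m}" by (auto simp: incomparables_def)
    have "?A \<subseteq> C" using nth_spine_in iK by auto
    moreover have "?B \<inter> C = {}"
      using incomparable_spine_notin[of i] iK by (auto simp: incomparables_def)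
    ultimately show "?A \<inter> ?B = {}" by blast
    show "\<forall>a\<in>?A. \<forall>b\<in>?B. \<not> prec a b \<and> \<not> prec b a"
    proof (intro ballI)
      fix a b assume "a \<in> ?A" "b \<in> ?B"
      then obtain k where k: "i \<le> k" "k \<le> i + K" "a = spine ! k"
        and b: "b < m" "incomparable b (spine ! i)" "incomparable b (spine ! (i + K))"
        by (auto simp: incomparables_def)
      then have "incomparable b a" using incomparable_spine_between[OF k(1,2) iK b] by simp
      then show "\<not> prec a b \<and> \<not> prec b a" by (simp add: incomparable_def)
    qed
  qed
  ultimately show ?thesis by simp
qed

lemma comparable_spine_below:
  assumes "k \<le> i" "i < length spine" "z \<in> incomparables (spine ! i)" "\<not> incomparable z (spine ! k)"
  shows "prec (spine ! k) z"
proof -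
  have "z \<notin> C" using incomparable_spine_notin assms by (simp add: incomparables_def)
  then have "prec z (spine ! k) \<or> prec (spine ! k) z"
    using assms nth_spine_in by (auto simp: incomparable_def)
  then show ?thesis
    using spine_prec_right[of k i z] assms by (auto simp: incomparables_def incomparable_def)
qed

lemma comparable_spine_above:
  assumes "i \<le> k" "k < length spine" "z \<in> incomparables (spine ! i)" "\<not> incomparable z (spine ! k)"
  shows "prec z (spine ! k)"
proof -
  have "z \<notin> C" using incomparable_spine_notin[of i z] assms by (simp add: incomparables_def)
  then have "prec z (spine ! k) \<or> prec (spine ! k) z"
    using assms nth_spine_in by (auto simp: incomparable_def)
  then show ?thesis
    using spine_prec_left[of i k z] assms by (auto simp: incomparables_def incomparable_def)
qed

lemma prec_take_spine:
  assumes "k \<le> i" "i < length spine" "z \<in> incomparables (spine ! i)" "\<not> incomparable z (spine ! k)"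
    and c: "c \<in> set (take k spine)"
  shows "prec c z"
proof -
  obtain j where "j < length (take k spine)" "take k spine ! j = c"
    using c by (metis in_set_conv_nth)
  then have j: "j \<le> k" "c = spine ! j" by auto
  then show ?thesis
    using comparable_spine_below[OF assms(1-4)] spine_prec_left[of j k z] assms
    by (auto simp: incomparables_def)
qed

lemma prec_drop_spine:
  assumes "i \<le> k" "k < length spine" "z \<in> incomparables (spine ! i)" "\<not> incomparable z (spine ! k)"
    and c: "c \<in> set (drop (Suc k) spine)"
  shows "prec z c"
proof -
  obtain j where "j < length (drop (Suc k) spine)" "drop (Suc k) spine ! j = c"
    using c by (metis in_set_conv_nth)
  then have j: "Suc k + j < length spine" "c = spine ! (Suc k + j)" by auto
  then show ?thesis
    using comparable_spine_above[OF assms(1-4)] spine_prec_right[of k "Suc k + j" z] assms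
    by (auto simp: incomparables_def)
qed

text \<open>Such a chain can replace the spine elements strictly between \<open>spine ! (i - K)\<close> and
  \<open>spine ! (i + K)\<close>, so the maximality of \<open>C\<close> bounds its length.\<close>

lemma card_chain_incomparables_le:
  assumes i: "i < length spine" and Z: "chain Z" "Z \<subseteq> incomparables (spine ! i)"
    and lo: "K \<le> i \<Longrightarrow> \<forall>z\<in>Z. \<not> incomparable z (spine ! (i - K))"
    and hi: "i + K < length spine \<Longrightarrow> \<forall>z\<in>Z. \<not> incomparable z (spine ! (i + K))"
  shows "card Z \<le> 2 * K + 1"
proof -
  let ?Lo = "set (take (i - K) spine)" and ?Hi = "set (drop (Suc (i + K)) spine)"
  have Zm: "Z \<subseteq> {..<m}" and ZC: "Z \<inter> C = {}"
    using Z incomparable_spine_notin[OF i] by (auto simp: incomparables_def)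
  have lo_prec: "prec c z" if "c \<in> ?Lo" "z \<in> Z" for c z
    using prec_take_spine[of "i - K" i z c] lo i Z that by (cases "K \<le> i") auto
  have hi_prec: "prec z c" if "c \<in> ?Hi" "z \<in> Z" for c z
    using prec_drop_spine[of i "i + K" z c] hi Z that by (cases "i + K < length spine") auto
  have LoHi: "?Lo \<subseteq> C" "?Hi \<subseteq> C"
    using set_spine by (auto dest: in_set_takeD in_set_dropD)
  have "chain (?Lo \<union> Z \<union> ?Hi)"
    unfolding chain_def
  proof (intro conjI ballI impI)
    show "?Lo \<union> Z \<union> ?Hi \<subseteq> {..<m}" using LoHi C_subset_lessThan Zm by blast
    fix a b assume a: "a \<in> ?Lo \<union> Z \<union> ?Hi" and b: "b \<in> ?Lo \<union> Z \<union> ?Hi" and "a \<noteq> b"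
    have C: "prec a b \<or> prec b a" if "a \<in> C" "b \<in> C"
      using chain_C that \<open>a \<noteq> b\<close> by (simp add: chain_def)
    have Z': "prec a b \<or> prec b a" if "a \<in> Z" "b \<in> Z"
      using Z(1) that \<open>a \<noteq> b\<close> by (simp add: chain_def)
    from a b LoHi show "prec a b \<or> prec b a"
      using C Z' lo_prec hi_prec by (elim UnE) blast+
  qed
  then have le: "card (?Lo \<union> Z \<union> ?Hi) \<le> length spine"
    using card_chain_le distinct_card[OF distinct_spine] set_spine by simp
  have LoHi_disj: "?Lo \<inter> ?Hi = {}"
  proof -
    have "?Lo \<inter> set (drop (i - K) spine) = {}"
      using distinct_spine by (metis append_take_drop_id distinct_append)
    moreover have "?Hi \<subseteq> set (drop (i - K) spine)" by (rule set_drop_subset_set_drop) simp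
    ultimately show ?thesis by blast
  qed
  have "?Lo \<inter> Z = {}" "(?Lo \<union> Z) \<inter> ?Hi = {}" using ZC LoHi LoHi_disj by blast+
  then have "card (?Lo \<union> Z \<union> ?Hi) = card ?Lo + card Z + card ?Hi"
    using chain_finite[OF Z(1)] by (simp add: card_Un_disjoint)
  moreover have "card ?Lo = i - K" "card ?Hi = length spine - Suc (i + K)"
    using distinct_spine i by (simp_all add: distinct_card)
  ultimately show ?thesis using le i by linarith
qed

lemma card_incomparables_le:
  assumes i: "i < length spine"
  shows "card (incomparables (spine ! i)) \<le> decomp_bound K"
proof -
  let ?I = "incomparables (spine ! i)"
  define IR where "IR = (if i + K < length spine
    then {v \<in> ?I. incomparable v (spine ! (i + K))} else {})"
  define IL where "IL = (if K \<le> i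
    then {v \<in> incomparables (spine ! (i - K)). incomparable v (spine ! i)} else {})"
  define IN where "IN = ?I - IR - IL"
  have "card IR \<le> K" using card_incomparable_pair_le by (simp add: IR_def)
  moreover have "card IL \<le> K" using card_incomparable_pair_le[of "i - K"] i by (auto simp: IL_def)
  moreover have "card IN \<le> (2 * K + 1) * (2 * K + 1)"
  proof (rule card_le_height_mult_width)
    show "IN \<subseteq> {..<m}" by (auto simp: IN_def incomparables_def)
    fix Z assume Z: "chain Z" "Z \<subseteq> IN"
    show "card Z \<le> 2 * K + 1"
      by (rule card_chain_incomparables_le[OF i Z(1)])
        (use Z(2) in \<open>auto simp: IN_def IR_def IL_def incomparables_def\<close>)
  qed
  moreover have "card ?I \<le> card IR + card IL + card IN"
  proof -
    have "?I = IR \<union> IL \<union> IN" by (auto simp: IN_def IR_def IL_def incomparables_def split: if_splits)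
    then show ?thesis by (metis card_Un_le add_le_mono1 order_trans)
  qed
  ultimately show ?thesis unfolding decomp_bound_def by linarith
qed

definition first_incomparable :: "nat \<Rightarrow> nat" where
  "first_incomparable v = (LEAST i. i < length spine \<and> incomparable v (spine ! i))"

lemma first_incomparable_spec:
  assumes "v < m" "v \<notin> C"
  shows "first_incomparable v < length spine" "incomparable v (spine ! first_incomparable v)"
  using LeastI_ex[OF exists_incomparable_spine[OF assms]] unfolding first_incomparable_def by auto

lemma comparable_before_first_incomparable:
  assumes v: "v < m" "v \<notin> C" and j: "j < first_incomparable v"
  shows "prec v (spine ! j) \<or> prec (spine ! j) v"
proof -
  have jl: "j < length spine" using first_incomparable_spec[OF v] j by simp
  then have "\<not> incomparable v (spine ! j)"
    using not_less_Least[OF j[unfolded first_incomparable_def]] by blast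
  moreover have "v \<noteq> spine ! j" using nth_spine_in[OF jl] v(2) by auto
  ultimately show ?thesis by (simp add: incomparable_def)
qed

definition attached :: "nat \<Rightarrow> nat list" where
  "attached i = filter (\<lambda>v. v \<notin> C \<and> first_incomparable v = i) [0..<m]"

text \<open>The order \<open>W\<^sub>1, V\<^sub>1, \<dots>, W\<^sub>n, V\<^sub>n\<close> of the theorem, with \<open>W\<^sub>i = spine ! i\<close>.\<close>

definition layout :: "nat list" where
  "layout = concat (map (\<lambda>i. spine ! i # attached i) [0..<length spine])"

lemma set_attached: "set (attached i) = {v. v < m \<and> v \<notin> C \<and> first_incomparable v = i}"
  by (auto simp: attached_def)

lemma attached_incomparable: "v \<in> set (attached i) \<Longrightarrow> incomparable v (spine ! i)"
  using first_incomparable_spec by (auto simp: set_attached)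

lemma length_attached_le:
  assumes i: "i < length spine"
  shows "length (attached i) \<le> decomp_bound K"
proof -
  have "length (attached i) = card (set (attached i))"
    by (metis attached_def distinct_card distinct_filter distinct_upt)
  also have "\<dots> \<le> card (incomparables (spine ! i))"
    by (rule card_mono) (auto simp: incomparables_def set_attached attached_incomparable)
  also have "\<dots> \<le> decomp_bound K" using card_incomparables_le[OF i] .
  finally show ?thesis .
qed

lemma set_layout: "set layout = {..<m}"
proof
  show "set layout \<subseteq> {..<m}"
    using nth_spine_lt by (auto simp: layout_def set_attached)
  show "{..<m} \<subseteq> set layout"
  proof
    fix v assume "v \<in> {..<m}"
    then have v: "v < m" by simp
    show "v \<in> set layout"
    proof (cases "v \<in> C")
      case True
      then obtain i where "i < length spine" "spine ! i = v"
        using set_spine by (metis in_set_conv_nth)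
      then show ?thesis by (force simp: layout_def)
    next
      case False
      then have "first_incomparable v < length spine" "v \<in> set (attached (first_incomparable v))"
        using first_incomparable_spec[OF v] v by (auto simp: set_attached)
      then show ?thesis by (force simp: layout_def)
    qed
  qed
qed

lemma distinct_layout: "distinct layout"
  unfolding layout_def
proof (rule distinct_concat_upt)
  fix i assume "i < length spine"
  then show "distinct (spine ! i # attached i)"
    using nth_spine_in by (auto simp: set_attached attached_def)
next
  fix i j assume ij: "i < j" "j < length spine"
  then have "spine ! i \<noteq> spine ! j" using distinct_spine by (simp add: nth_eq_iff_index_eq)
  then show "set (spine ! i # attached i) \<inter> set (spine ! j # attached j) = {}"
    using ij nth_spine_in[of i] nth_spine_in[of j] by (auto simp: set_attached)
qed

lemma attached_sorted: "sorted_wrt (\<lambda>u v. \<not> prec v u) (spine ! i # attached i)"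
proof -
  have "sorted_wrt (\<lambda>u v. \<not> prec v u) [0..<m]"
    unfolding sorted_wrt_iff_nth_less using prec_less
    by (metis length_upt minus_nat.diff_0 not_less_iff_gr_or_eq nth_upt order.strict_trans plus_nat.add_0)
  then have "sorted_wrt (\<lambda>u v. \<not> prec v u) (attached i)"
    unfolding attached_def by (rule sorted_wrt_filter)
  then show ?thesis using attached_incomparable by (auto simp: incomparable_def)
qed

lemma layout_blocks_ordered:
  assumes ij: "i < j" "j < length spine"
    and x: "x \<in> set (spine ! i # attached i)" and y: "y \<in> set (spine ! j # attached j)"
  shows "\<not> prec y x"
proof
  assume yx: "prec y x"
  have i: "i < length spine" using ij by simp
  have cij: "prec (spine ! i) (spine ! j)" using spine_prec[OF ij] .
  have lt: "spine ! i < m" "spine ! j < m" using nth_spine_lt i ij(2) by auto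
  have xm: "x < m" and ym: "y < m" using x y lt by (auto simp: set_attached)
  consider "x = spine ! i" "y = spine ! j" | "x = spine ! i" "y \<in> set (attached j)"
    | "x \<in> set (attached i)" "y = spine ! j" | "x \<in> set (attached i)" "y \<in> set (attached j)"
    using x y by auto
  then show False
  proof cases
    case 1
    then show False using yx prec_less[OF lt(2) lt(1)] spine_less[OF ij] by simp
  next
    case 2
    then have "prec y (spine ! j)" using prec_trans[OF ym lt] yx cij by simp
    then show False using attached_incomparable[OF 2(2)] by (simp add: incomparable_def)
  next
    case 3
    then have "prec (spine ! i) x" using prec_trans[OF lt xm] yx cij by simp
    then show False using attached_incomparable[OF 3(1)] by (simp add: incomparable_def)
  next
    case 4
    then have y: "y \<notin> C" "first_incomparable y = j" and "first_incomparable x = i"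
      by (auto simp: set_attached)
    then have "prec y (spine ! i) \<or> prec (spine ! i) y"
      using comparable_before_first_incomparable[OF ym y(1)] ij by simp
    then show False
    proof
      assume "prec y (spine ! i)"
      then have "prec y (spine ! j)" using prec_trans[OF ym lt] cij by simp
      then show False using attached_incomparable[OF 4(2)] by (simp add: incomparable_def)
    next
      assume "prec (spine ! i) y"
      then have "prec (spine ! i) x" using prec_trans[OF lt(1) ym xm] yx by simp
      then show False using attached_incomparable[OF 4(1)] by (simp add: incomparable_def)
    qed
  qed
qed

lemma layout_sorted: "sorted_wrt (\<lambda>u v. \<not> prec v u) layout"
  unfolding layout_def by (rule sorted_wrt_concat_upt[OF attached_sorted layout_blocks_ordered])

end

section \<open>Decomposing itineraries\<close>

context right_angled_coxeter
begin

lemma realizes_geodesic: "realizes S E Ws u w \<Longrightarrow> geodesic w"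
  unfolding realizes_def geodesic_def
  by (metis cls_eq_iff eqv_context[of _ _ u "[]"] append_Nil2)

lemma edge_refl_conj:
  assumes "edge_refl [] v j = edge_refl [] v' j'"
  shows "edge_refl u v j = edge_refl u v' j'"
proof -
  have "take j v @ [v ! j] @ rev (take j v) \<approx> take j' v' @ [v' ! j'] @ rev (take j' v')"
    using assms by (simp add: edge_refl_def cls_eq_iff)
  then have "u @ (take j v @ [v ! j] @ rev (take j v)) @ rev u
      \<approx> u @ (take j' v' @ [v' ! j'] @ rev (take j' v')) @ rev u"
    by (rule eqv_context)
  then show ?thesis by (simp add: edge_refl_def cls_eq_iff)
qed

lemma walls_intersect_edge_refl_conj:
  assumes u: "u \<in> lists S" and v: "v \<in> lists S" and jk: "j < length v" "k < length v"
  shows "walls_intersect S E (wall S E (edge_refl u v j)) (wall S E (edge_refl u v k)) \<longleftrightarrow>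
    walls_intersect S E (wall S E (edge_refl [] v j)) (wall S E (edge_refl [] v k))"
proof -
  define \<rho> where "\<rho> i = take i v @ [v ! i] @ rev (take i v)" for i
  have \<rho>: "\<rho> j \<in> lists S" "\<rho> k \<in> lists S"
    using v jk lists_take lists_nth lists_rev by (simp_all add: \<rho>_def)
  have conj: "edge_refl u v i = cls S E (u @ \<rho> i @ rev u)" "edge_refl [] v i = cls S E (\<rho> i)" for i
    by (simp_all add: edge_refl_def \<rho>_def)
  show ?thesis
    unfolding walls_intersect_iff[OF edge_refl_reflection[OF u v jk(1)] edge_refl_reflection[OF u v jk(2)]]
      walls_intersect_iff[OF edge_refl_reflection[OF lists.Nil v jk(1)] edge_refl_reflection[OF lists.Nil v jk(2)]]
    by (simp add: conj cls_conj_eq_iff[OF u] commute_el_conj_iff[OF u \<rho>])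
qed

end

context geodesic_word
begin

lemma walls_intersect_wrefl_iff:
  assumes a: "a < length w" and b: "b < length w"
  shows "walls_intersect S E (wall S E (wrefl a)) (wall S E (wrefl b)) \<longleftrightarrow>
    a = b \<or> \<not> nested a b \<and> \<not> nested b a"
proof -
  have nested_disjoint: "\<not> walls_intersect S E (wall S E (wrefl k)) (wall S E (wrefl l))"
    if "k < length w" "l < length w" "nested k l" for k l
    using nested_not_intersect[OF take_w_lists nth_w_in_S take_w_lists nth_w_in_S] that
    unfolding nested_def wrefl_def edge_refl_def by simp
  have sym: "walls_intersect S E W W' \<longleftrightarrow> walls_intersect S E W' W" for W W'
    unfolding walls_intersect_def commute_el_def by blast
  show ?thesis
    using walls_intersect_iff[OF wrefl_reflection[OF a] wrefl_reflection[OF b]]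
      unnested_commute[OF a b] nested_disjoint[OF a b] nested_disjoint[OF b a] sym wrefl_inj[OF a b]
    by auto
qed

lemma bounded_products_order_nested:
  assumes bpp: "bounded_product_projections S E D (cls S E w)"
  shows "bounded_products_order (length w) nested (nat \<lfloor>D\<rfloor>)"
proof
  fix A B assume A: "A \<subseteq> {..<length w}" and B: "B \<subseteq> {..<length w}" and AB: "A \<inter> B = {}"
    and cross: "\<forall>a\<in>A. \<forall>b\<in>B. \<not> nested a b \<and> \<not> nested b a"
  let ?f = "\<lambda>k. wall S E (wrefl k)"
  have inj: "inj_on ?f {..<length w}"
    by (rule inj_onI) (use wall_inj[OF wrefl_reflection] wrefl_inj in auto)
  have sep: "?f ` {..<length w} \<subseteq> sep_walls S E (cls S E []) (cls S E w)"
    using wrefl_reflection separates_iff_inversions[OF lists.Nil w_lists] inversions_w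
    by (auto simp: sep_walls_def walls_def)
  have "real (min (card (?f ` A)) (card (?f ` B))) \<le> D"
    using bpp unfolding bounded_product_projections_def
  proof (elim allE impE)
    show "?f ` A \<subseteq> sep_walls S E (cls S E []) (cls S E w)" "?f ` B \<subseteq> sep_walls S E (cls S E []) (cls S E w)"
      using sep A B by auto
    show "?f ` A \<inter> ?f ` B = {}" using inj_on_image_Int[OF inj A B] AB by simp
    show "\<forall>a\<in>?f ` A. \<forall>b\<in>?f ` B. \<not> wall_less S E (cls S E []) a b \<and> \<not> wall_less S E (cls S E []) b a"
      using cross unfolding nested_def by blast
  qed
  then have "real (min (card A) (card B)) \<le> D"
    using card_image[OF inj_on_subset[OF inj A]] card_image[OF inj_on_subset[OF inj B]] by simp
  then show "min (card A) (card B) \<le> nat \<lfloor>D\<rfloor>" by linarith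
qed (use nested_less nested_trans in blast)+

end

locale realized_itinerary = geodesic_word S E w for S :: "'a set" and E and w +
  fixes u :: "'a list" and Ws :: "'a list set set set list"
  assumes realizes_Ws: "realizes S E Ws u w"
begin

lemma u_lists: "u \<in> lists S"
  using realizes_Ws by (simp add: realizes_def)

lemma Ws_nth_walls: "k < length w \<Longrightarrow> Ws ! k \<in> walls S E"
  using realizes_Ws by (simp add: realizes_def)

lemma Ws_nth:
  assumes k: "k < length w"
  shows "Ws ! k = wall S E (edge_refl u w k)"
proof -
  obtain r where r: "r \<in> reflections S E" "Ws ! k = wall S E r"
    using Ws_nth_walls[OF k] by (auto simp: walls_def)
  have "{cls S E (u @ take k w), cls S E (u @ take (Suc k) w)} \<in> Ws ! k"
    using realizes_Ws k by (simp add: realizes_def)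
  then have "{cls S E (u @ take k w), cls S E ((u @ take k w) @ [w ! k])} \<in> wall S E r"
    using r(2) k by (simp add: take_Suc_conv_app_nth)
  moreover have "u @ take k w \<in> lists S" using u_lists take_w_lists by simp
  ultimately have "cls S E ((u @ take k w) @ [w ! k] @ rev (u @ take k w)) = r"
    using edge_in_wall_iff nth_w_in_S[OF k] by blast
  then show ?thesis using r by (simp add: edge_refl_def)
qed

lemma walls_intersect_Ws_iff:
  assumes "a < length w" "b < length w"
  shows "walls_intersect S E (Ws ! a) (Ws ! b) \<longleftrightarrow> a = b \<or> \<not> nested a b \<and> \<not> nested b a"
proof -
  have "walls_intersect S E (Ws ! a) (Ws ! b) \<longleftrightarrow>
      walls_intersect S E (wall S E (wrefl a)) (wall S E (wrefl b))"
    unfolding Ws_nth[OF assms(1)] Ws_nth[OF assms(2)] wrefl_def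
    by (rule walls_intersect_edge_refl_conj[OF u_lists w_lists assms])
  then show ?thesis using walls_intersect_wrefl_iff[OF assms] by simp
qed

lemma realizes_linear_extension:
  assumes \<sigma>: "distinct \<sigma>" "set \<sigma> = {..<length w}" "sorted_wrt (\<lambda>x y. \<not> nested y x) \<sigma>"
  shows "realizes S E (map ((!) Ws) \<sigma>) u (permute \<sigma>)" and "cls S E (u @ permute \<sigma>) = cls S E (u @ w)"
proof -
  let ?p = "permute \<sigma>"
  have r: "realizing \<sigma>" by (rule realizing_linear_extension[OF \<sigma>])
  have len: "length ?p = length w" "length \<sigma> = length w"
    using realizing_length[OF r] by (simp_all add: permute_def)
  have p: "?p \<in> lists S" using permute_lists \<sigma>(2) by simp
  show endpoint: "cls S E (u @ ?p) = cls S E (u @ w)"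
    using r eqv_context[of ?p w u "[]"] by (simp add: realizing_def cls_eq_iff)
  have edge: "{cls S E (u @ take j ?p), cls S E (u @ take (Suc j) ?p)} \<in> Ws ! (\<sigma> ! j)"
    if j: "j < length w" for j
  proof -
    have ul: "u @ take j ?p \<in> lists S" using u_lists p lists_take by simp
    have pj: "?p ! j \<in> S" using p len j lists_nth by simp
    have "edge_refl [] ?p j = edge_refl [] w (\<sigma> ! j)"
      using r j unfolding realizing_def wrefl_def by blast
    then have "cls S E ((u @ take j ?p) @ [?p ! j] @ rev (u @ take j ?p)) = edge_refl u w (\<sigma> ! j)"
      using edge_refl_conj[of ?p j w "\<sigma> ! j" u] by (simp add: edge_refl_def)
    then have "{cls S E (u @ take j ?p), cls S E ((u @ take j ?p) @ [?p ! j])}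
        \<in> wall S E (edge_refl u w (\<sigma> ! j))"
      using edge_in_wall_iff[OF ul pj] by blast
    then show ?thesis
      using Ws_nth[OF realizing_nth_less[OF r j]] len j by (simp add: take_Suc_conv_app_nth)
  qed
  have shortest: "length ?p \<le> length v" if "v \<in> lists S" "cls S E (u @ v) = cls S E (u @ ?p)" for v
    using realizes_Ws that endpoint len unfolding realizes_def by auto
  show "realizes S E (map ((!) Ws) \<sigma>) u ?p"
    unfolding realizes_def
  proof (intro conjI allI impI ballI)
    fix j assume "j < length (map ((!) Ws) \<sigma>)"
    then have j: "j < length w" using len by simp
    then show "map ((!) Ws) \<sigma> ! j \<in> walls S E"
      using Ws_nth_walls[OF realizing_nth_less[OF r j]] len by simp
    show "{cls S E (u @ take j ?p), cls S E (u @ take (Suc j) ?p)} \<in> map ((!) Ws) \<sigma> ! j"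
      using edge[OF j] len j by simp
  qed (use u_lists p len shortest in simp_all)
qed

end

locale itinerary_spine = realized_itinerary +
  fixes K :: nat and C :: "nat set"
  assumes maximum_chain_C: "maximum_chain (length w) nested K C"
begin

sublocale maximum_chain "length w" nested K C
  by (rule maximum_chain_C)

definition spine_walls :: "'a list set set set list" where
  "spine_walls = map ((!) Ws) spine"

definition attached_walls :: "'a list set set set list list" where
  "attached_walls = map (\<lambda>i. map ((!) Ws) (attached i)) [0..<length spine]"

definition layout_walls :: "'a list set set set list" where
  "layout_walls = map ((!) Ws) layout"

lemma layout_walls_concat:
  "layout_walls = concat (map (\<lambda>i. spine_walls ! i # attached_walls ! i) [0..<length spine])"
  unfolding layout_walls_def spine_walls_def attached_walls_def layout_def map_concat
  by (auto intro!: arg_cong[where f = concat] map_cong)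

lemma layout_walls_itinerary: "itinerary S E layout_walls" "itin_equiv S E Ws layout_walls"
  using realizes_linear_extension[OF distinct_layout set_layout layout_sorted] realizes_Ws
  unfolding itinerary_def itin_equiv_def joins_def layout_walls_def by blast+

lemma length_attached_walls_le: "i < length spine \<Longrightarrow> length (attached_walls ! i) \<le> decomp_bound K"
  using length_attached_le by (simp add: attached_walls_def)

lemma attached_walls_intersect:
  assumes i: "i < length spine" and V: "V \<in> set (attached_walls ! i)"
  shows "walls_intersect S E V (spine_walls ! i)"
proof -
  obtain v where v: "v \<in> set (attached i)" "V = Ws ! v" using i V by (auto simp: attached_walls_def)
  then have "v < length w" "incomparable v (spine ! i)"
    using attached_incomparable by (auto simp: set_attached)
  then show ?thesis
    using walls_intersect_Ws_iff[OF _ nth_spine_lt[OF i]] v(2) i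
    by (simp add: spine_walls_def incomparable_def)
qed

lemma spine_walls_disjoint:
  assumes ij: "i < length spine" "j < length spine" "i \<noteq> j"
  shows "\<not> walls_intersect S E (spine_walls ! i) (spine_walls ! j)"
proof -
  have "spine ! i \<noteq> spine ! j" using distinct_spine ij by (simp add: nth_eq_iff_index_eq)
  moreover have "nested (spine ! i) (spine ! j) \<or> nested (spine ! j) (spine ! i)"
    using spine_prec ij by (metis nat_neq_iff)
  ultimately show ?thesis
    using walls_intersect_Ws_iff[OF nth_spine_lt[OF ij(1)] nth_spine_lt[OF ij(2)]] ij
    by (simp add: spine_walls_def)
qed

lemma card_walls_crossing_spine_le:
  assumes i: "i < length spine"
  shows "card {V \<in> set layout_walls. V \<noteq> spine_walls ! i \<and> walls_intersect S E V (spine_walls ! i)}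
    \<le> decomp_bound K" (is "card ?X \<le> _")
proof -
  let ?I = "incomparables (spine ! i)"
  have fin: "finite ?I" by (simp add: incomparables_def)
  have "?X \<subseteq> (!) Ws ` ?I"
  proof
    fix V assume V: "V \<in> ?X"
    then obtain k where k: "k < length w" "V = Ws ! k" using set_layout by (auto simp: layout_walls_def)
    then have "k \<noteq> spine ! i" "walls_intersect S E (Ws ! k) (Ws ! (spine ! i))"
      using V i by (auto simp: spine_walls_def)
    then have "k \<in> ?I"
      using walls_intersect_Ws_iff[OF k(1) nth_spine_lt[OF i]] k(1)
      by (simp add: incomparables_def incomparable_def)
    then show "V \<in> (!) Ws ` ?I" using k by simp
  qed
  then have "card ?X \<le> card ((!) Ws ` ?I)" by (rule card_mono[OF finite_imageI[OF fin]])
  also have "\<dots> \<le> card ?I" by (rule card_image_le[OF fin])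
  also have "\<dots> \<le> decomp_bound K" by (rule card_incomparables_le[OF i])
  finally show ?thesis .
qed

end

context realized_itinerary
begin

lemma itinerary_decomposition:
  assumes "bounded_products_order (length w) nested K"
  shows "\<exists>n Wl Vl U.
          length Wl = n \<and> length Vl = n \<and>
          U = concat (map (\<lambda>i. Wl ! i # Vl ! i) [0..<n]) \<and>
          itinerary S E U \<and> itin_equiv S E Ws U \<and>
          (\<forall>i<n. real (length (Vl ! i)) \<le> real (decomp_bound K)) \<and>
          (\<forall>i<n. \<forall>V\<in>set (Vl ! i). walls_intersect S E V (Wl ! i)) \<and>
          (\<forall>i<n. \<forall>j<n. i \<noteq> j \<longrightarrow> \<not> walls_intersect S E (Wl ! i) (Wl ! j)) \<and>
          (\<forall>i<n. real (card {V \<in> set U. V \<noteq> Wl ! i \<and> walls_intersect S E V (Wl ! i)})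
              \<le> real (decomp_bound K))"
proof -
  interpret bounded_products_order "length w" nested K by fact
  obtain C where "chain C" "\<forall>C'. chain C' \<longrightarrow> card C' \<le> card C"
    using exists_max_card_chain by blast
  then interpret itinerary_spine S E w u Ws K C
    by unfold_locales
      (auto simp: maximum_chain_def maximum_chain_axioms_def bounded_products_order_axioms)
  show ?thesis
    using layout_walls_concat layout_walls_itinerary length_attached_walls_le attached_walls_intersect
      spine_walls_disjoint card_walls_crossing_spine_le
    by (intro exI[of _ "length spine"] exI[of _ spine_walls] exI[of _ attached_walls]
        exI[of _ layout_walls]) (simp add: spine_walls_def attached_walls_def)
qed

end

lemma traverses_decomposition:
  fixes S :: "'a set"
  assumes "racs S E" "bounded_product_projections S E D \<gamma>" "traverses S E Ws \<gamma>"
  shows "\<exists>n Wl Vl U.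
          length Wl = n \<and> length Vl = n \<and>
          U = concat (map (\<lambda>i. Wl ! i # Vl ! i) [0..<n]) \<and>
          itinerary S E U \<and> itin_equiv S E Ws U \<and>
          (\<forall>i<n. real (length (Vl ! i)) \<le> real (decomp_bound (nat \<lfloor>D\<rfloor>))) \<and>
          (\<forall>i<n. \<forall>V\<in>set (Vl ! i). walls_intersect S E V (Wl ! i)) \<and>
          (\<forall>i<n. \<forall>j<n. i \<noteq> j \<longrightarrow> \<not> walls_intersect S E (Wl ! i) (Wl ! j)) \<and>
          (\<forall>i<n. real (card {V \<in> set U. V \<noteq> Wl ! i \<and> walls_intersect S E V (Wl ! i)})
              \<le> real (decomp_bound (nat \<lfloor>D\<rfloor>)))"
proof -
  interpret right_angled_coxeter S E
    using assms(1) unfolding racs_def by unfold_locales blast+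
  obtain u w where uw: "realizes S E Ws u w" "cls S E w = \<gamma>"
    using assms(3) by (auto simp: traverses_def)
  interpret realized_itinerary S E w u Ws
    using uw(1) realizes_geodesic by unfold_locales auto
  have "bounded_product_projections S E D (cls S E w)" using assms(2) uw(2) by simp
  then show ?thesis by (rule itinerary_decomposition[OF bounded_products_order_nested])
qed

theorem proposition3p4:
  shows "\<forall>D::real. D > 0 \<longrightarrow> (\<exists>R::real. R > 0 \<and>
    (\<forall>(S :: nat set) E \<gamma> Ws.
       racs S E \<longrightarrow> \<gamma> \<in> grp S E \<longrightarrow> bounded_product_projections S E D \<gamma> \<longrightarrow>
       itinerary S E Ws \<longrightarrow> traverses S E Ws \<gamma> \<longrightarrow>
       (\<exists>n Wl Vl U.
          length Wl = n \<and> length Vl = n \<and>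
          U = concat (map (\<lambda>i. Wl ! i # Vl ! i) [0..<n]) \<and>
          itinerary S E U \<and> itin_equiv S E Ws U \<and>
          (\<forall>i<n. real (length (Vl ! i)) \<le> R) \<and>
          (\<forall>i<n. \<forall>V\<in>set (Vl ! i). walls_intersect S E V (Wl ! i)) \<and>
          (\<forall>i<n. \<forall>j<n. i \<noteq> j \<longrightarrow> \<not> walls_intersect S E (Wl ! i) (Wl ! j)) \<and>
          (\<forall>i<n. real (card {V \<in> set U. V \<noteq> Wl ! i \<and> walls_intersect S E V (Wl ! i)}) \<le> R))))"
  apply (intro allI impI)
  subgoal for D
    by (intro exI[of _ "real (decomp_bound (nat \<lfloor>D\<rfloor>))"] conjI allI impI traverses_decomposition)
      (simp_all add: decomp_bound_pos)
  done

end
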